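(* Assume the setting described in the context with $\alpha\le d$. Let $\Lambda$ be a fixed finite set of points of $\mathbb{Z}_{\ge1}^d$ (contained in $\Gamma$ for all large $L$), and define $$\mathcal{L}^{(\Lambda)}=\sum_{k\in\Lambda}\mathcal{L}^{(k)}_k+\frac{1}{2c_\alpha^N}\sum_{j,k\in\Lambda}\frac{\mathcal{L}^{(jk)}_{jk}}{\delta_{jk}+(1-\delta_{jk})\|\mathbf r_j-\mathbf r_k\|_\Gamma^\alpha},\qquad\hat{\mathcal{L}}^{(\Lambda)}=\sum_{k\in\Lambda}\mathcal{L}^{(k)}_k,$$ both acting on operators on $\bigotimes_{j\in\Lambda}\mathbb{C}^D$. Then for every trace-class operator $Q^{(\Lambda)}$ on $\bigotimes_{j\in\Lambda}\mathbb{C}^D$ and every $t\ge0$, $$\lim_{N\to\infty}\big\|e^{t\mathcal{L}^{(\Lambda)}}[Q^{(\Lambda)}]-e^{t\hat{\mathcal{L}}^{(\Lambda)}}[Q^{(\Lambda)}]\big\|_{\mathrm{tr}}=0.$$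
   Context: Fix integers $d\ge1$, $D\ge2$, exponent $\alpha\ge0$. For $L\in\mathbb{N}$ let $\Gamma=\{1,\dots,L\}^d$, $N=L^d$, site $j$ at $\mathbf r_j\in\Gamma$. With open boundary conditions $\mathrm{dist}(a,b)=|a-b|$, with periodic ones $\mathrm{dist}(a,b)=\min(|a-b|,L-|a-b|)$; $\|\mathbf r_j-\mathbf r_k\|_\Gamma=(\sum_\mu\mathrm{dist}(\mathbf r_j^\mu,\mathbf r_k^\mu)^2)^{1/2}$. The Kac factor is $c_\alpha^N=\sum_{j\in\Gamma}\|\mathbf r_j\|_\Gamma^{-\alpha}$. Each site carries $\mathbb{C}^D$; superscripts indicate the sites on which maps act. Data: Hermitian $h_k$ on $\mathbb{C}^D$, Hermitian $V_{jk}$ on $\mathbb{C}^D\otimes\mathbb{C}^D$, a finite family of operators $L_\mu$ on $\mathbb{C}^D$, rates $\kappa^\mu_k\ge0$, coefficients $w^\mu_{jk}\in\mathbb{C}$, such that the generators considered generate completely positive trace-preserving dynamics. $\mathcal{L}_k^{(k)}[X]=-i[h_k^{(k)},X]+\sum_\mu\kappa^\mu_k(L_\mu^{(k)}XL_\mu^{(k)\dagger}-\tfrac12\{L_\mu^{(k)\dagger}L_\mu^{(k)},X\})$; $\mathcal{L}_{jk}^{(jk)}[X]=-\tfrac{i(1-\delta_{jk})}{2}[V_{jk}^{(jk)}+V_{kj}^{(jk)},X]+\sum_\mu[\tfrac{w^\mu_{jk}}{2}(L_\mu^{(j)}XL_\mu^{(k)\dagger}-\tfrac12\{L_\mu^{(k)\dagger}L_\mu^{(j)},X\})+\tfrac{w^\mu_{kj}}{2}(L_\mu^{(k)}XL_\mu^{(j)\dagger}-\tfrac12\{L_\mu^{(j)\dagger}L_\mu^{(k)},X\})]$.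 The data are assumed uniformly bounded in $N$, in particular $C=\sup_N\sup_{j,k}\big(2\|V_{jk}\|+\sum_\mu(|w^\mu_{jk}|+|w^\mu_{kj}|)\|L_\mu\|\,\|L_\mu^\dagger\|\big)<\infty$. *)

theory Defs
  imports "HOL-Analysis.Analysis"
begin

definition mm :: "'i set \<Rightarrow> ('i \<Rightarrow> 'i \<Rightarrow> complex) \<Rightarrow> ('i \<Rightarrow> 'i \<Rightarrow> complex) \<Rightarrow> ('i \<Rightarrow> 'i \<Rightarrow> complex)" where
  "mm I X Y = (\<lambda>a b. \<Sum>c\<in>I. X a c * Y c b)"

definition adj :: "('i \<Rightarrow> 'i \<Rightarrow> complex) \<Rightarrow> ('i \<Rightarrow> 'i \<Rightarrow> complex)" where
  "adj X = (\<lambda>a b. cnj (X b a))"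

definition tr :: "'i set \<Rightarrow> ('i \<Rightarrow> 'i \<Rightarrow> complex) \<Rightarrow> complex" where
  "tr I X = (\<Sum>a\<in>I. X a a)"

definition psd :: "'i set \<Rightarrow> ('i \<Rightarrow> 'i \<Rightarrow> complex) \<Rightarrow> bool" where
  "psd I P = (\<forall>v :: 'i \<Rightarrow> complex.
      Im (\<Sum>a\<in>I. \<Sum>b\<in>I. cnj (v a) * P a b * v b) = 0 \<and>
      0 \<le> Re (\<Sum>a\<in>I. \<Sum>b\<in>I. cnj (v a) * P a b * v b))"

definition abs_op :: "'i set \<Rightarrow> ('i \<Rightarrow> 'i \<Rightarrow> complex) \<Rightarrow> ('i \<Rightarrow> 'i \<Rightarrow> complex)" where
  "abs_op I X = (THE P. (\<forall>a b. a \<notin> I \<or> b \<notin> I \<longrightarrow> P a b = 0) \<and> psd I P \<and>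
       (\<forall>a\<in>I. \<forall>b\<in>I. mm I P P a b = mm I (adj X) X a b))"

definition trace_norm :: "'i set \<Rightarrow> ('i \<Rightarrow> 'i \<Rightarrow> complex) \<Rightarrow> real" where
  "trace_norm I X = Re (tr I (abs_op I X))"

definition sexp :: "real \<Rightarrow> (('i \<Rightarrow> 'i \<Rightarrow> complex) \<Rightarrow> ('i \<Rightarrow> 'i \<Rightarrow> complex))
                    \<Rightarrow> ('i \<Rightarrow> 'i \<Rightarrow> complex) \<Rightarrow> ('i \<Rightarrow> 'i \<Rightarrow> complex)" where
  "sexp t \<Phi> X = (\<lambda>a b. \<Sum>n. complex_of_real (t ^ n / fact n) * (\<Phi> ^^ n) X a b)"

text \<open>Complete positivity: id_m \<otimes> Phi is positive for every ancilla dimension m.\<close>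
definition completely_positive :: "'i set \<Rightarrow> (('i \<Rightarrow> 'i \<Rightarrow> complex) \<Rightarrow> ('i \<Rightarrow> 'i \<Rightarrow> complex)) \<Rightarrow> bool" where
  "completely_positive I \<Phi> = (\<forall>(m::nat) (Y :: nat \<times> 'i \<Rightarrow> nat \<times> 'i \<Rightarrow> complex).
      psd ({..<m} \<times> I) Y \<longrightarrow>
      psd ({..<m} \<times> I) (\<lambda>(a,\<sigma>) (b,\<tau>). \<Phi> (\<lambda>\<sigma>' \<tau>'. Y (a,\<sigma>') (b,\<tau>')) \<sigma> \<tau>))"

definition trace_preserving :: "'i set \<Rightarrow> (('i \<Rightarrow> 'i \<Rightarrow> complex) \<Rightarrow> ('i \<Rightarrow> 'i \<Rightarrow> complex)) \<Rightarrow> bool" where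
  "trace_preserving I \<Phi> = (\<forall>X. tr I (\<Phi> X) = tr I X)"

definition cptp :: "'i set \<Rightarrow> (('i \<Rightarrow> 'i \<Rightarrow> complex) \<Rightarrow> ('i \<Rightarrow> 'i \<Rightarrow> complex)) \<Rightarrow> bool" where
  "cptp I \<Phi> = (completely_positive I \<Phi> \<and> trace_preserving I \<Phi>)"

text \<open>Sites are points of Z_{>=1}^d represented as lists of naturals of length d.\<close>
type_synonym site = "nat list"

definition Gamma :: "nat \<Rightarrow> nat \<Rightarrow> site set" where
  "Gamma d L = {r. length r = d \<and> (\<forall>i<d. 1 \<le> r ! i \<and> r ! i \<le> L)}"

text \<open>one-dimensional distance; per = True: periodic, per = False: open boundary conditions\<close>
definition cdist :: "bool \<Rightarrow> nat \<Rightarrow> nat \<Rightarrow> nat \<Rightarrow> real" where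
  "cdist per L a b = (if per then min \<bar>real a - real b\<bar> (real L - \<bar>real a - real b\<bar>)
                      else \<bar>real a - real b\<bar>)"

definition gnorm :: "bool \<Rightarrow> nat \<Rightarrow> nat \<Rightarrow> site \<Rightarrow> site \<Rightarrow> real" where
  "gnorm per L d r s = sqrt (\<Sum>i<d. (cdist per L (r ! i) (s ! i))\<^sup>2)"

text \<open>Kac factor c_alpha^N, N = L^d (with the Isabelle convention 0 powr x = 0).\<close>
definition kac :: "bool \<Rightarrow> nat \<Rightarrow> real \<Rightarrow> nat \<Rightarrow> real" where
  "kac per d \<alpha> L = (\<Sum>r\<in>Gamma d L. gnorm per L d r (replicate d 0) powr (- \<alpha>))"

text \<open>Basis of (C^D)^{\<otimes> Lambda}: configurations sigma : Lambda -> {0..<D}, extended by 0.\<close>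
type_synonym cfg = "site \<Rightarrow> nat"
type_synonym op = "cfg \<Rightarrow> cfg \<Rightarrow> complex"
type_synonym sop = "nat \<Rightarrow> nat \<Rightarrow> complex"
type_synonym top = "nat \<times> nat \<Rightarrow> nat \<times> nat \<Rightarrow> complex"

definition cfgs :: "nat \<Rightarrow> site set \<Rightarrow> cfg set" where
  "cfgs D \<Lambda> = {\<sigma>. (\<forall>j\<in>\<Lambda>. \<sigma> j < D) \<and> (\<forall>j. j \<notin> \<Lambda> \<longrightarrow> \<sigma> j = 0)}"

definition emb1 :: "site \<Rightarrow> sop \<Rightarrow> op" where
  "emb1 k A = (\<lambda>\<sigma> \<tau>. if (\<forall>i. i \<noteq> k \<longrightarrow> \<sigma> i = \<tau> i) then A (\<sigma> k) (\<tau> k) else 0)"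

text \<open>V^{(jk)}: two-site operator, first tensor factor on site j, second on site k (j \<noteq> k).\<close>
definition emb2 :: "site \<Rightarrow> site \<Rightarrow> top \<Rightarrow> op" where
  "emb2 j k V = (\<lambda>\<sigma> \<tau>. if (\<forall>i. i \<noteq> j \<and> i \<noteq> k \<longrightarrow> \<sigma> i = \<tau> i)
                        then V (\<sigma> j, \<sigma> k) (\<tau> j, \<tau> k) else 0)"

definition comm :: "cfg set \<Rightarrow> op \<Rightarrow> op \<Rightarrow> op" where
  "comm I A X = (\<lambda>\<sigma> \<tau>. mm I A X \<sigma> \<tau> - mm I X A \<sigma> \<tau>)"

definition dterm :: "cfg set \<Rightarrow> op \<Rightarrow> op \<Rightarrow> op \<Rightarrow> op" where
  "dterm I A B X = (\<lambda>\<sigma> \<tau>. mm I (mm I A X) (adj B) \<sigma> \<tau>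
       - (1/2) * (mm I (mm I (adj B) A) X \<sigma> \<tau> + mm I X (mm I (adj B) A) \<sigma> \<tau>))"

definition Lloc :: "cfg set \<Rightarrow> nat \<Rightarrow> (site \<Rightarrow> sop) \<Rightarrow> (nat \<Rightarrow> site \<Rightarrow> real) \<Rightarrow> (nat \<Rightarrow> sop)
                   \<Rightarrow> site \<Rightarrow> op \<Rightarrow> op" where
  "Lloc I m h \<kappa> Lop k X = (\<lambda>\<sigma> \<tau>.
      - \<i> * comm I (emb1 k (h k)) X \<sigma> \<tau>
      + (\<Sum>\<mu><m. complex_of_real (\<kappa> \<mu> k) * dterm I (emb1 k (Lop \<mu>)) (emb1 k (Lop \<mu>)) X \<sigma> \<tau>))"

definition Lpair :: "cfg set \<Rightarrow> nat \<Rightarrow> (site \<Rightarrow> site \<Rightarrow> top) \<Rightarrow> (nat \<Rightarrow> site \<Rightarrow> site \<Rightarrow> complex)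
                    \<Rightarrow> (nat \<Rightarrow> sop) \<Rightarrow> site \<Rightarrow> site \<Rightarrow> op \<Rightarrow> op" where
  "Lpair I m V w Lop j k X = (\<lambda>\<sigma> \<tau>.
      (if j = k then 0 else
         - (\<i> / 2) * comm I (\<lambda>\<sigma>' \<tau>'. emb2 j k (V j k) \<sigma>' \<tau>' + emb2 j k (V k j) \<sigma>' \<tau>') X \<sigma> \<tau>)
      + (\<Sum>\<mu><m. w \<mu> j k / 2 * dterm I (emb1 j (Lop \<mu>)) (emb1 k (Lop \<mu>)) X \<sigma> \<tau>
               + w \<mu> k j / 2 * dterm I (emb1 k (Lop \<mu>)) (emb1 j (Lop \<mu>)) X \<sigma> \<tau>))"

text \<open>Full generator L^{(Lambda)} for lattice side length L (N = L^d).\<close>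
definition Lfull :: "bool \<Rightarrow> nat \<Rightarrow> real \<Rightarrow> nat \<Rightarrow> site set \<Rightarrow> nat
     \<Rightarrow> (site \<Rightarrow> sop) \<Rightarrow> (site \<Rightarrow> site \<Rightarrow> top) \<Rightarrow> (nat \<Rightarrow> sop) \<Rightarrow> (nat \<Rightarrow> site \<Rightarrow> real)
     \<Rightarrow> (nat \<Rightarrow> site \<Rightarrow> site \<Rightarrow> complex) \<Rightarrow> nat \<Rightarrow> op \<Rightarrow> op" where
  "Lfull per d \<alpha> D \<Lambda> m h V Lop \<kappa> w L X = (\<lambda>\<sigma> \<tau>.
      (\<Sum>k\<in>\<Lambda>. Lloc (cfgs D \<Lambda>) m h \<kappa> Lop k X \<sigma> \<tau>)
      + complex_of_real (1 / (2 * kac per d \<alpha> L)) *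
        (\<Sum>j\<in>\<Lambda>. \<Sum>k\<in>\<Lambda>. Lpair (cfgs D \<Lambda>) m V w Lop j k X \<sigma> \<tau> /
            complex_of_real (if j = k then 1 else gnorm per L d j k powr \<alpha>)))"

definition Lhat :: "nat \<Rightarrow> site set \<Rightarrow> nat \<Rightarrow> (site \<Rightarrow> sop) \<Rightarrow> (nat \<Rightarrow> sop)
     \<Rightarrow> (nat \<Rightarrow> site \<Rightarrow> real) \<Rightarrow> op \<Rightarrow> op" where
  "Lhat D \<Lambda> m h Lop \<kappa> X = (\<lambda>\<sigma> \<tau>. \<Sum>k\<in>\<Lambda>. Lloc (cfgs D \<Lambda>) m h \<kappa> Lop k X \<sigma> \<tau>)"

end

theory Submission
  imports Defs
begin

text \<open>Write the full generator as \<open>L\<^sub>N = L\<^sub>0 + \<epsilon>\<^sub>N P\<^sub>N\<close>, where \<open>L\<^sub>0\<close> is the decoupled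
  generator, \<open>P\<^sub>N\<close> the interaction part and \<open>\<epsilon>\<^sub>N = 1 / (2 c\<^sub>\<alpha>\<^sup>N)\<close>. On the finite-dimensional
  space of operators on \<open>\<Lambda>\<close>, both \<open>L\<^sub>0\<close> and \<open>P\<^sub>N\<close> are bounded in the entrywise 1-norm uniformly
  in \<open>N\<close>, because the data are bounded and the pair weights \<open>\<parallel>r\<^sub>j - r\<^sub>k\<parallel>^(-\<alpha>)\<close> are at most \<open>1\<close>.
  Comparing the exponential series term by term then bounds every entry of \<open>exp(t L\<^sub>N) Q - exp(t L\<^sub>0) Q\<close>
  by \<open>\<epsilon>\<^sub>N\<close> times a constant. The trace norm of an \<open>n \<times> n\<close> matrix is at most \<open>n^(3/2)\<close> times its
  largest entry, as one reads off the diagonal of the positive square root \<open>|X|\<close>; that this square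
  root exists is shown by the classical monotone iteration. Finally, for \<open>\<alpha> \<le> d\<close> every dyadic
  shell of the lattice contributes a constant to the Kac factor, so \<open>c\<^sub>\<alpha>\<^sup>N\<close> grows like \<open>log L\<close>
  and \<open>\<epsilon>\<^sub>N \<rightarrow> 0\<close>.\<close>

section \<open>Finite matrices and positive semidefiniteness\<close>

definition mat_vec :: "'i set \<Rightarrow> ('i \<Rightarrow> 'i \<Rightarrow> complex) \<Rightarrow> ('i \<Rightarrow> complex) \<Rightarrow> ('i \<Rightarrow> complex)" where
  "mat_vec I A v = (\<lambda>a. \<Sum>b\<in>I. A a b * v b)"

definition vinner :: "'i set \<Rightarrow> ('i \<Rightarrow> complex) \<Rightarrow> ('i \<Rightarrow> complex) \<Rightarrow> complex" where
  "vinner I u v = (\<Sum>a\<in>I. cnj (u a) * v a)"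

definition qform :: "'i set \<Rightarrow> ('i \<Rightarrow> 'i \<Rightarrow> complex) \<Rightarrow> ('i \<Rightarrow> complex) \<Rightarrow> complex" where
  "qform I A v = (\<Sum>a\<in>I. \<Sum>b\<in>I. cnj (v a) * A a b * v b)"

definition vnorm2 :: "'i set \<Rightarrow> ('i \<Rightarrow> complex) \<Rightarrow> real" where
  "vnorm2 I v = (\<Sum>a\<in>I. (cmod (v a))\<^sup>2)"

definition frob2 :: "'i set \<Rightarrow> ('i \<Rightarrow> 'i \<Rightarrow> complex) \<Rightarrow> real" where
  "frob2 I A = (\<Sum>a\<in>I. \<Sum>b\<in>I. (cmod (A a b))\<^sup>2)"

definition id_mat :: "'i \<Rightarrow> 'i \<Rightarrow> complex" where
  "id_mat = (\<lambda>a b. if a = b then 1 else 0)"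

definition hermitian :: "'i set \<Rightarrow> ('i \<Rightarrow> 'i \<Rightarrow> complex) \<Rightarrow> bool" where
  "hermitian I A = (\<forall>a\<in>I. \<forall>b\<in>I. A a b = cnj (A b a))"

text \<open>Matrices are functions on the whole index type, but only their entries on \<open>I \<times> I\<close> matter
  (\<open>id_mat\<close>, for instance, is nonzero outside); hence equality of matrices is taken on \<open>I \<times> I\<close>.\<close>

definition mat_eq :: "'i set \<Rightarrow> ('i \<Rightarrow> 'i \<Rightarrow> complex) \<Rightarrow> ('i \<Rightarrow> 'i \<Rightarrow> complex) \<Rightarrow> bool" where
  "mat_eq I X Y = (\<forall>a\<in>I. \<forall>b\<in>I. X a b = Y a b)"

lemma mat_eq_refl [simp]: "mat_eq I X X"
  unfolding mat_eq_def by simp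

lemma mat_eq_sym: "mat_eq I X Y \<Longrightarrow> mat_eq I Y X"
  unfolding mat_eq_def by simp

lemma mat_eq_trans [trans]: "mat_eq I X Y \<Longrightarrow> mat_eq I Y Z \<Longrightarrow> mat_eq I X Z"
  unfolding mat_eq_def by simp

lemma sum_eq_single_point:
  assumes "finite I" "a \<in> I" "\<And>y. y \<noteq> a \<Longrightarrow> g y = 0"
  shows "sum g I = g a"
  using assms by (subst sum.mono_neutral_right[of I "{a}"]) auto

lemma sum_eq_two_points:
  assumes "finite I" "a \<in> I" "b \<in> I" "a \<noteq> b" "\<And>y. y \<noteq> a \<Longrightarrow> y \<noteq> b \<Longrightarrow> g y = 0"
  shows "sum g I = g a + g b"
  using assms by (subst sum.mono_neutral_right[of I "{a, b}"]) auto

lemma qform_eq_vinner: "qform I A v = vinner I v (mat_vec I A v)"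
  unfolding qform_def vinner_def mat_vec_def by (simp add: sum_distrib_left mult.assoc)

lemma psd_iff_qform: "psd I P \<longleftrightarrow> (\<forall>v. Im (qform I P v) = 0 \<and> 0 \<le> Re (qform I P v))"
  unfolding psd_def qform_def by simp

lemma vinner_self: "vinner I v v = complex_of_real (vnorm2 I v)"
  unfolding vinner_def vnorm2_def of_real_sum
  by (rule sum.cong) (auto simp: mult.commute intro: complex_norm_square[unfolded of_real_power, symmetric])

lemma vnorm2_nonneg: "0 \<le> vnorm2 I v"
  unfolding vnorm2_def by (simp add: sum_nonneg)

lemma vnorm2_cong: "(\<And>a. a \<in> I \<Longrightarrow> v a = w a) \<Longrightarrow> vnorm2 I v = vnorm2 I w"
  unfolding vnorm2_def by (auto intro!: sum.cong)

lemma vnorm2_eq_0: "finite I \<Longrightarrow> vnorm2 I v = 0 \<Longrightarrow> a \<in> I \<Longrightarrow> v a = 0"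
  unfolding vnorm2_def by (simp add: sum_nonneg_eq_0_iff)

lemma vinner_cnj: "vinner I u v = cnj (vinner I v u)"
  unfolding vinner_def by (simp add: mult.commute)

lemma vinner_cong:
  "(\<And>b. b \<in> I \<Longrightarrow> u b = u' b) \<Longrightarrow> (\<And>b. b \<in> I \<Longrightarrow> v b = v' b) \<Longrightarrow> vinner I u v = vinner I u' v'"
  unfolding vinner_def by (rule sum.cong) auto

lemma vinner_add_left: "vinner I (\<lambda>x. v x + c * u x) w = vinner I v w + cnj c * vinner I u w"
  unfolding vinner_def by (auto simp: algebra_simps sum.distrib sum_distrib_left)

lemma vinner_add_right: "vinner I w (\<lambda>x. v x + c * u x) = vinner I w v + c * vinner I w u"
  unfolding vinner_def by (auto simp: algebra_simps sum.distrib sum_distrib_left)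

lemma mat_vec_add: "mat_vec I A (\<lambda>x. v x + c * u x) = (\<lambda>a. mat_vec I A v a + c * mat_vec I A u a)"
  unfolding mat_vec_def by (auto simp: algebra_simps sum.distrib sum_distrib_left)

lemma mat_vec_mm: "mat_vec I (mm I A B) v = mat_vec I A (mat_vec I B v)"
  unfolding mm_def mat_vec_def
  by (auto simp: sum_distrib_left sum_distrib_right mult.assoc intro!: ext sum.swap)

lemma mat_vec_id_mat: "finite I \<Longrightarrow> a \<in> I \<Longrightarrow> mat_vec I id_mat v a = v a"
  unfolding mat_vec_def id_mat_def by (subst sum_eq_single_point[of I a]) auto

lemma vinner_adj: "vinner I u (mat_vec I A v) = vinner I (mat_vec I (adj A) u) v"
  unfolding vinner_def mat_vec_def adj_def
  by (auto simp: sum_distrib_left sum_distrib_right mult_ac intro!: sum.swap)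

lemma vinner_hermitian:
  assumes "hermitian I A"
  shows "vinner I u (mat_vec I A v) = vinner I (mat_vec I A u) v"
proof -
  have "mat_vec I (adj A) u a = mat_vec I A u a" if "a \<in> I" for a
    using assms that unfolding hermitian_def adj_def mat_vec_def
    by (intro sum.cong) (metis complex_cnj_cnj)+
  then show ?thesis
    unfolding vinner_adj by (intro vinner_cong) auto
qed

lemma qform_add:
  "qform I A (\<lambda>x. v x + c * u x) =
     qform I A v + c * vinner I v (mat_vec I A u) + cnj c * vinner I u (mat_vec I A v) + cnj c * c * qform I A u"
  unfolding qform_eq_vinner mat_vec_add vinner_add_left vinner_add_right by (simp add: algebra_simps)

lemma vnorm2_add:
  "vnorm2 I (\<lambda>x. v x + complex_of_real r * w x) = vnorm2 I v + 2 * r * Re (vinner I v w) + r * r * vnorm2 I w"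
proof -
  have "complex_of_real (vnorm2 I (\<lambda>x. v x + complex_of_real r * w x)) =
      of_real (vnorm2 I v) + of_real r * (vinner I v w + cnj (vinner I v w)) + of_real (r * r * vnorm2 I w)"
    unfolding vinner_self[symmetric] vinner_add_left vinner_add_right
    by (simp add: vinner_cnj[of I w v] vinner_self algebra_simps)
  also have "\<dots> = of_real (vnorm2 I v + 2 * r * Re (vinner I v w) + r * r * vnorm2 I w)"
    by (simp add: complex_add_cnj)
  finally show ?thesis
    by (simp only: of_real_eq_iff)
qed

lemma cmod_sum_mult_squared_le:
  "(cmod (\<Sum>i\<in>I. f i * g i))\<^sup>2 \<le> (\<Sum>i\<in>I. (cmod (f i))\<^sup>2) * (\<Sum>i\<in>I. (cmod (g i))\<^sup>2)"
proof -
  have "cmod (\<Sum>i\<in>I. f i * g i) \<le> (\<Sum>i\<in>I. cmod (f i) * cmod (g i))"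
    by (metis (no_types, lifting) norm_mult norm_sum sum.cong)
  then have "(cmod (\<Sum>i\<in>I. f i * g i))\<^sup>2 \<le> (\<Sum>i\<in>I. cmod (f i) * cmod (g i))\<^sup>2"
    by (simp add: power_mono)
  also have "\<dots> \<le> (\<Sum>i\<in>I. (cmod (f i))\<^sup>2) * (\<Sum>i\<in>I. (cmod (g i))\<^sup>2)"
    by (rule Cauchy_Schwarz_ineq_sum)
  finally show ?thesis .
qed

lemma vinner_Cauchy_Schwarz: "(cmod (vinner I u v))\<^sup>2 \<le> vnorm2 I u * vnorm2 I v"
  unfolding vinner_def vnorm2_def using cmod_sum_mult_squared_le[of "\<lambda>a. cnj (u a)" v I] by simp

lemma vnorm2_mat_vec_le: "vnorm2 I (mat_vec I A v) \<le> frob2 I A * vnorm2 I v"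
proof -
  have "vnorm2 I (mat_vec I A v) \<le> (\<Sum>a\<in>I. (\<Sum>b\<in>I. (cmod (A a b))\<^sup>2) * vnorm2 I v)"
    unfolding vnorm2_def mat_vec_def by (intro sum_mono cmod_sum_mult_squared_le)
  then show ?thesis
    unfolding frob2_def by (simp add: sum_distrib_right)
qed

lemma frob2_adj: "frob2 I (adj X) = frob2 I X"
  unfolding frob2_def adj_def complex_mod_cnj by (rule sum.swap)

lemma mm_assoc: "finite I \<Longrightarrow> mm I (mm I A B) C = mm I A (mm I B C)"
  unfolding mm_def by (auto simp: sum_distrib_left sum_distrib_right mult.assoc intro!: ext sum.swap)

lemma mm_cong: "mat_eq I X X' \<Longrightarrow> mat_eq I Y Y' \<Longrightarrow> mat_eq I (mm I X Y) (mm I X' Y')"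
  unfolding mat_eq_def mm_def by auto

lemma mm_add_left: "mm I (\<lambda>a b. X a b + Y a b) Z = (\<lambda>a b. mm I X Z a b + mm I Y Z a b)"
  unfolding mm_def by (auto simp: algebra_simps sum.distrib)

lemma mm_add_right: "mm I Z (\<lambda>a b. X a b + Y a b) = (\<lambda>a b. mm I Z X a b + mm I Z Y a b)"
  unfolding mm_def by (auto simp: algebra_simps sum.distrib)

lemma mm_diff_left: "mm I (\<lambda>a b. X a b - Y a b) Z = (\<lambda>a b. mm I X Z a b - mm I Y Z a b)"
  unfolding mm_def by (auto simp: algebra_simps sum_subtractf)

lemma mm_diff_right: "mm I Z (\<lambda>a b. X a b - Y a b) = (\<lambda>a b. mm I Z X a b - mm I Z Y a b)"
  unfolding mm_def by (auto simp: algebra_simps sum_subtractf)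

lemma mm_scale_left: "mm I (\<lambda>a b. r * X a b) Z = (\<lambda>a b. r * mm I X Z a b)"
  unfolding mm_def by (auto simp: algebra_simps sum_distrib_left)

lemma mm_scale_right: "mm I Z (\<lambda>a b. r * X a b) = (\<lambda>a b. r * mm I Z X a b)"
  unfolding mm_def by (auto simp: algebra_simps sum_distrib_left)

lemma mm_zero_left [simp]: "mm I (\<lambda>a b. 0) Z = (\<lambda>a b. 0)"
  unfolding mm_def by auto

lemma mm_zero_right [simp]: "mm I Z (\<lambda>a b. 0) = (\<lambda>a b. 0)"
  unfolding mm_def by auto

lemma mm_id_mat_left: "finite I \<Longrightarrow> a \<in> I \<Longrightarrow> mm I id_mat Y a b = Y a b"
  unfolding mm_def id_mat_def by (subst sum_eq_single_point[of I a]) auto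

lemma mm_id_mat_right: "finite I \<Longrightarrow> b \<in> I \<Longrightarrow> mm I Y id_mat a b = Y a b"
  unfolding mm_def id_mat_def by (subst sum_eq_single_point[of I b]) auto

lemma tr_mm_commute: "finite I \<Longrightarrow> tr I (mm I X Y) = tr I (mm I Y X)"
  unfolding tr_def mm_def by (subst sum.swap) (simp add: mult.commute)

lemma qform_cong: "mat_eq I X Y \<Longrightarrow> qform I X v = qform I Y v"
  unfolding mat_eq_def qform_def by (auto intro!: sum.cong)

lemma psd_cong: "mat_eq I X Y \<Longrightarrow> psd I X \<Longrightarrow> psd I Y"
  unfolding psd_iff_qform using qform_cong by metis

lemma qform_plus: "qform I (\<lambda>a b. X a b + Y a b) v = qform I X v + qform I Y v"
  unfolding qform_def by (simp add: algebra_simps sum.distrib)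

lemma qform_minus: "qform I (\<lambda>a b. X a b - Y a b) v = qform I X v - qform I Y v"
  unfolding qform_def by (simp add: algebra_simps sum_subtractf)

lemma qform_scale: "qform I (\<lambda>a b. r * X a b) v = r * qform I X v"
  unfolding qform_def by (simp add: algebra_simps sum_distrib_left)

lemma qform_zero [simp]: "qform I (\<lambda>a b. 0) v = 0"
  unfolding qform_def by simp

lemma qform_id_mat: "finite I \<Longrightarrow> qform I id_mat v = complex_of_real (vnorm2 I v)"
  unfolding qform_eq_vinner vinner_self[symmetric] by (intro vinner_cong) (auto simp: mat_vec_id_mat)

lemma adj_adj [simp]: "adj (adj X) = X"
  unfolding adj_def by simp

lemma qform_gram: "qform I (mm I (adj X) X) v = complex_of_real (vnorm2 I (mat_vec I X v))"
  unfolding qform_eq_vinner mat_vec_mm vinner_adj adj_adj vinner_self ..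

lemma qform_unit_vector:
  assumes "finite I" "a \<in> I"
  shows "qform I P (\<lambda>x. if x = a then 1 else 0) = P a a"
  unfolding qform_def using assms
  by (simp add: sum_eq_single_point[of I a])

lemma qform_two_point_vector:
  assumes "finite I" "a \<in> I" "b \<in> I" "a \<noteq> b"
  shows "qform I P (\<lambda>x. if x = a then \<alpha> else if x = b then \<beta> else 0) =
     cnj \<alpha> * P a a * \<alpha> + cnj \<alpha> * P a b * \<beta> + cnj \<beta> * P b a * \<alpha> + cnj \<beta> * P b b * \<beta>"
  unfolding qform_def using assms
  by (simp add: sum_eq_two_points[of I a b] add.assoc)

lemma psd_hermitian:
  assumes "psd I P" "finite I"
  shows "hermitian I P"
  unfolding hermitian_def
proof (intro ballI)
  fix a b assume a: "a \<in> I" and b: "b \<in> I"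
  have real_qform: "Im (qform I P v) = 0" for v
    using assms(1) by (simp add: psd_iff_qform)
  have diag: "Im (P x x) = 0" if "x \<in> I" for x
    using real_qform[of "\<lambda>y. if y = x then 1 else 0"] qform_unit_vector[OF assms(2) that] by simp
  show "P a b = cnj (P b a)"
  proof (cases "a = b")
    case True
    then show ?thesis using diag[OF a] by (simp add: complex_eq_iff)
  next
    case False
    have "Im (P a b) + Im (P b a) = 0"
      using real_qform[of "\<lambda>x. if x = a then 1 else if x = b then 1 else 0"] diag[OF a] diag[OF b]
      by (simp add: qform_two_point_vector[OF assms(2) a b False])
    moreover have "Re (P a b) - Re (P b a) = 0"
      using real_qform[of "\<lambda>x. if x = a then 1 else if x = b then \<i> else 0"] diag[OF a] diag[OF b]
      by (simp add: qform_two_point_vector[OF assms(2) a b False])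
    ultimately show ?thesis by (simp add: complex_eq_iff)
  qed
qed

lemma psd_kernel:
  assumes "psd I P" "finite I" "Re (qform I P v) = 0" "a \<in> I"
  shows "mat_vec I P v a = 0"
proof -
  let ?u = "mat_vec I P v"
  define n where "n = vnorm2 I ?u"
  define R where "R = Re (qform I P ?u)"
  have "n = 0"
  proof (rule ccontr)
    assume "n \<noteq> 0"
    then have n: "n > 0" using vnorm2_nonneg[of I ?u] unfolding n_def by linarith
    have R: "R \<ge> 0" using assms(1) unfolding R_def psd_iff_qform by auto
    define s where "s = n / (R + 1)"
    have s: "s > 0" unfolding s_def using n R by simp
    have Pu: "vinner I v (mat_vec I P ?u) = of_real n"
      unfolding vinner_hermitian[OF psd_hermitian[OF assms(1,2)]] n_def vinner_self by simp
    have "0 \<le> Re (qform I P (\<lambda>x. v x + complex_of_real (- s) * ?u x))"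
      using assms(1) unfolding psd_iff_qform by blast
    also have "\<dots> = - 2 * s * n + s * s * R"
      unfolding qform_add Pu n_def R_def vinner_self using assms(3) by (simp add: algebra_simps)
    finally have "2 * n \<le> s * R" using s by (simp add: algebra_simps)
    moreover have "s * R < n" unfolding s_def using n R by (simp add: field_simps)
    ultimately show False using n by simp
  qed
  then show ?thesis unfolding n_def using vnorm2_eq_0[OF assms(2) _ assms(4)] by blast
qed

lemma mm_hermitian_diag:
  assumes "hermitian I D" "a \<in> I"
  shows "mm I D D a a = complex_of_real (\<Sum>x\<in>I. (cmod (D a x))\<^sup>2)"
proof -
  have "D a x * D x a = complex_of_real ((cmod (D a x))\<^sup>2)" if "x \<in> I" for x
  proof -
    have "D x a = cnj (D a x)"
      using assms that unfolding hermitian_def by blast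
    then show ?thesis by (simp only: complex_norm_square)
  qed
  then show ?thesis
    unfolding mm_def of_real_sum by (intro sum.cong) simp_all
qed

section \<open>Positive square roots and the trace norm\<close>

text \<open>Uniqueness of the positive square root: for \<open>D = P - Q\<close> one has \<open>PD = -DQ\<close>, so the
  nonnegative quantities \<open>tr (DPD)\<close> and \<open>tr (DQD)\<close> add up to zero; hence \<open>PD = QD = 0\<close> and
  \<open>D\<^sup>2 = 0\<close>.\<close>

lemma psd_sqrt_unique:
  assumes fin: "finite I" and P: "psd I P" and Q: "psd I Q" and sq: "mat_eq I (mm I P P) (mm I Q Q)"
  shows "mat_eq I P Q"
proof -
  define D where "D = (\<lambda>a b. P a b - Q a b)"
  have hP: "hermitian I P" and hQ: "hermitian I Q"
    using psd_hermitian P Q fin by blast+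
  have hD: "hermitian I D"
    unfolding hermitian_def
  proof (intro ballI)
    fix a b assume "a \<in> I" "b \<in> I"
    then have "P a b = cnj (P b a)" "Q a b = cnj (Q b a)"
      using hP hQ unfolding hermitian_def by blast+
    then show "D a b = cnj (D b a)"
      unfolding D_def by simp
  qed
  have cnj_D: "cnj (D b a) = D a b" if "a \<in> I" "b \<in> I" for a b
  proof -
    have "D a b = cnj (D b a)"
      using hD that unfolding hermitian_def by blast
    then show ?thesis by simp
  qed
  have PD: "mm I P D a b = - mm I D Q a b" if "a \<in> I" "b \<in> I" for a b
    using sq that unfolding D_def mm_diff_left mm_diff_right mat_eq_def by simp
  define col where "col = (\<lambda>a b. D b a)"
  have qform_col: "qform I M (col a) = mm I D (mm I M D) a a" if "a \<in> I" for M a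
    unfolding qform_def mm_def col_def
    using that by (auto simp: sum_distrib_left mult.assoc cnj_D intro!: sum.cong)
  have "tr I (mm I D (mm I P D)) = - tr I (mm I D (mm I D Q))"
    unfolding tr_def mm_def[of I D "mm I P D"] mm_def[of I D "mm I D Q"]
    by (simp add: PD sum_negf[symmetric])
  also have "tr I (mm I D (mm I D Q)) = tr I (mm I D (mm I Q D))"
    using tr_mm_commute[OF fin, of "mm I D Q" D] by (simp add: mm_assoc fin)
  finally have "(\<Sum>a\<in>I. Re (qform I P (col a)) + Re (qform I Q (col a))) = 0"
    unfolding tr_def by (simp add: qform_col sum.distrib flip: Re_sum)
  moreover have "0 \<le> Re (qform I P (col a))" "0 \<le> Re (qform I Q (col a))" for a
    using P Q unfolding psd_iff_qform by blast+
  ultimately have "Re (qform I P (col a)) = 0 \<and> Re (qform I Q (col a)) = 0" if "a \<in> I" for a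
    using that fin by (simp add: sum_nonneg_eq_0_iff add_nonneg_eq_0_iff)
  then have "mat_vec I P (col a) x = 0 \<and> mat_vec I Q (col a) x = 0" if "x \<in> I" "a \<in> I" for x a
    using psd_kernel[OF P fin] psd_kernel[OF Q fin] that by blast
  then have "mm I D D a a = 0" if "a \<in> I" for a
    using that unfolding D_def mm_diff_left unfolding mat_vec_def mm_def col_def D_def by simp
  then have "(\<Sum>x\<in>I. (cmod (D a x))\<^sup>2) = 0" if "a \<in> I" for a
    using mm_hermitian_diag[OF hD that] that by (metis of_real_eq_0_iff)
  then show ?thesis
    using fin unfolding mat_eq_def D_def by (simp add: sum_nonneg_eq_0_iff)
qed

primrec mat_pow :: "'i set \<Rightarrow> ('i \<Rightarrow> 'i \<Rightarrow> complex) \<Rightarrow> nat \<Rightarrow> ('i \<Rightarrow> 'i \<Rightarrow> complex)" where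
  "mat_pow I B 0 = id_mat"
| "mat_pow I B (Suc n) = mm I B (mat_pow I B n)"

definition pos_contraction :: "'i set \<Rightarrow> ('i \<Rightarrow> 'i \<Rightarrow> complex) \<Rightarrow> bool" where
  "pos_contraction I B \<longleftrightarrow> finite I \<and> psd I B \<and> (\<forall>v. vnorm2 I (mat_vec I B v) \<le> vnorm2 I v)"

lemma mat_pow_add: "finite I \<Longrightarrow> mat_eq I (mat_pow I B (i + j)) (mm I (mat_pow I B i) (mat_pow I B j))"
proof (induction i)
  case 0
  then show ?case unfolding mat_eq_def by (simp add: mm_id_mat_left)
next
  case (Suc i)
  have "mat_eq I (mm I B (mat_pow I B (i + j))) (mm I B (mm I (mat_pow I B i) (mat_pow I B j)))"
    by (rule mm_cong[OF mat_eq_refl Suc.IH[OF Suc.prems]])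
  then show ?case by (simp add: mm_assoc Suc.prems)
qed

lemma mat_pow_commute:
  "finite I \<Longrightarrow> mat_eq I (mm I (mat_pow I B i) (mat_pow I B j)) (mm I (mat_pow I B j) (mat_pow I B i))"
  by (metis add.commute mat_eq_sym mat_eq_trans mat_pow_add)

lemma mat_pow_one: "finite I \<Longrightarrow> mat_eq I (mat_pow I B 1) B"
  unfolding mat_eq_def by (simp add: mm_id_mat_right)

lemma vnorm2_mat_pow_le:
  assumes "pos_contraction I B"
  shows "vnorm2 I (mat_vec I (mat_pow I B n) v) \<le> vnorm2 I v"
proof (induction n)
  case 0
  show ?case using assms by (simp add: pos_contraction_def mat_vec_id_mat cong: vnorm2_cong)
next
  case (Suc n)
  have "vnorm2 I (mat_vec I B (mat_vec I (mat_pow I B n) v)) \<le> vnorm2 I (mat_vec I (mat_pow I B n) v)"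
    using assms unfolding pos_contraction_def by blast
  with Suc.IH show ?case by (simp add: mat_vec_mm)
qed

lemma Re_qform_mat_pow_le:
  assumes "pos_contraction I B"
  shows "Re (qform I (mat_pow I B n) v) \<le> vnorm2 I v"
proof -
  let ?w = "mat_vec I (mat_pow I B n) v"
  have "(cmod (vinner I v ?w))\<^sup>2 \<le> vnorm2 I v * vnorm2 I ?w"
    by (rule vinner_Cauchy_Schwarz)
  also have "\<dots> \<le> (vnorm2 I v)\<^sup>2"
    using vnorm2_mat_pow_le[OF assms] vnorm2_nonneg[of I v]
    by (simp add: power2_eq_square mult_left_mono)
  finally have "cmod (vinner I v ?w) \<le> vnorm2 I v"
    using vnorm2_nonneg power2_le_imp_le by blast
  then show ?thesis
    unfolding qform_eq_vinner using complex_Re_le_cmod order_trans by blast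
qed

lemma hermitian_mat_pow:
  assumes "pos_contraction I B"
  shows "hermitian I (mat_pow I B n)"
proof (induction n)
  case 0
  show ?case by (auto simp: hermitian_def id_mat_def)
next
  case (Suc n)
  let ?P = "mat_pow I B n"
  have fin: "finite I" and hB: "hermitian I B"
    using assms psd_hermitian by (auto simp: pos_contraction_def)
  have "mat_eq I (mm I B ?P) (mm I (mat_pow I B 1) ?P)"
    by (rule mm_cong[OF mat_eq_sym[OF mat_pow_one[OF fin]] mat_eq_refl])
  also have "mat_eq I \<dots> (mm I ?P (mat_pow I B 1))"
    by (rule mat_pow_commute[OF fin])
  also have "mat_eq I \<dots> (mm I ?P B)"
    by (rule mm_cong[OF mat_eq_refl mat_pow_one[OF fin]])
  finally have comm: "mat_eq I (mm I B ?P) (mm I ?P B)" .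
  show ?case
    unfolding hermitian_def
  proof (intro ballI)
    fix a b assume a: "a \<in> I" and b: "b \<in> I"
    have "cnj (mm I B ?P b a) = (\<Sum>x\<in>I. cnj (B b x) * cnj (?P x a))"
      unfolding mm_def by simp
    also have "\<dots> = (\<Sum>x\<in>I. ?P a x * B x b)"
    proof (rule sum.cong)
      fix x assume x: "x \<in> I"
      have "B x b = cnj (B b x)" "?P a x = cnj (?P x a)"
        using hB Suc.IH x a b unfolding hermitian_def by blast+
      then show "cnj (B b x) * cnj (?P x a) = ?P a x * B x b" by simp
    qed simp
    also have "\<dots> = mm I B ?P a b"
      using comm a b unfolding mat_eq_def mm_def by simp
    finally show "mat_pow I B (Suc n) a b = cnj (mat_pow I B (Suc n) b a)" by simp
  qed
qed

text \<open>Writing \<open>B^n\<close> as \<open>B^k B^k\<close> or \<open>B^k B B^k\<close> with \<open>B^k\<close> hermitian exhibits its quadratic form as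
  a squared norm or as a value of the quadratic form of \<open>B\<close>.\<close>

lemma psd_mat_pow:
  assumes "pos_contraction I B"
  shows "psd I (mat_pow I B n)"
proof -
  have fin: "finite I" and B: "psd I B"
    using assms by (simp_all add: pos_contraction_def)
  define k where "k = n div 2"
  let ?P = "mat_pow I B k"
  have hP: "hermitian I ?P" by (rule hermitian_mat_pow[OF assms])
  have "n = k + k \<or> n = k + Suc k" unfolding k_def by presburger
  then show ?thesis
  proof
    assume n: "n = k + k"
    have "psd I (mm I ?P ?P)"
      unfolding psd_iff_qform qform_eq_vinner mat_vec_mm vinner_hermitian[OF hP] vinner_self
      by (simp add: vnorm2_nonneg)
    moreover have "mat_eq I (mm I ?P ?P) (mat_pow I B n)"
      unfolding n by (rule mat_eq_sym[OF mat_pow_add[OF fin]])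
    ultimately show ?thesis by (rule psd_cong[rotated])
  next
    assume n: "n = k + Suc k"
    have "psd I (mm I ?P (mm I B ?P))"
      using B unfolding psd_iff_qform qform_eq_vinner mat_vec_mm vinner_hermitian[OF hP] by simp
    moreover have "mat_eq I (mm I ?P (mm I B ?P)) (mat_pow I B n)"
      unfolding n using mat_eq_sym[OF mat_pow_add[OF fin, of B k "Suc k"]] by simp
    ultimately show ?thesis by (rule psd_cong[rotated])
  qed
qed

text \<open>\<open>nonneg_poly I B X s\<close>: on \<open>I \<times> I\<close>, \<open>X\<close> is a polynomial in \<open>B\<close> with nonnegative coefficients,
  and \<open>s\<close> is the value of that polynomial at \<open>1\<close>.\<close>

inductive nonneg_poly :: "'i set \<Rightarrow> ('i \<Rightarrow> 'i \<Rightarrow> complex) \<Rightarrow> ('i \<Rightarrow> 'i \<Rightarrow> complex) \<Rightarrow> real \<Rightarrow> bool"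
  for I B where
  pow: "nonneg_poly I B (mat_pow I B n) 1"
| zero: "nonneg_poly I B (\<lambda>a b. 0) 0"
| add: "nonneg_poly I B X s \<Longrightarrow> nonneg_poly I B Y t \<Longrightarrow> nonneg_poly I B (\<lambda>a b. X a b + Y a b) (s + t)"
| scale: "nonneg_poly I B X s \<Longrightarrow> 0 \<le> r \<Longrightarrow> nonneg_poly I B (\<lambda>a b. complex_of_real r * X a b) (r * s)"
| cong: "nonneg_poly I B X s \<Longrightarrow> mat_eq I X Y \<Longrightarrow> nonneg_poly I B Y s"

lemma nonneg_poly_psd:
  assumes "pos_contraction I B" and "nonneg_poly I B X s"
  shows "psd I X \<and> (\<forall>v. Re (qform I X v) \<le> s * vnorm2 I v)"
  using assms(2)
proof (induction rule: nonneg_poly.induct)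
  case (pow n)
  then show ?case using psd_mat_pow[OF assms(1)] Re_qform_mat_pow_le[OF assms(1)] by simp
next
  case zero
  then show ?case by (simp add: psd_iff_qform)
next
  case (add X s Y t)
  then show ?case by (auto simp: psd_iff_qform qform_plus algebra_simps add_mono)
next
  case (scale X s r)
  then show ?case by (auto simp: psd_iff_qform qform_scale mult.assoc mult_left_mono)
next
  case (cong X s Y)
  then show ?case using psd_cong qform_cong by metis
qed

lemma nonneg_poly_commute_pow:
  assumes "pos_contraction I B" and "nonneg_poly I B X s"
  shows "mat_eq I (mm I X (mat_pow I B j)) (mm I (mat_pow I B j) X)"
  using assms(2)
proof (induction rule: nonneg_poly.induct)
  case (pow n)
  then show ?case using mat_pow_commute assms(1) pos_contraction_def by blast
next
  case (cong X s Y)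
  have "mat_eq I (mm I Y (mat_pow I B j)) (mm I X (mat_pow I B j))"
    by (rule mm_cong[OF mat_eq_sym[OF cong(2)] mat_eq_refl])
  also have "mat_eq I \<dots> (mm I (mat_pow I B j) X)" by (rule cong.IH)
  also have "mat_eq I \<dots> (mm I (mat_pow I B j) Y)" by (rule mm_cong[OF mat_eq_refl cong(2)])
  finally show ?case .
qed (simp_all add: mm_add_left mm_add_right mm_scale_left mm_scale_right mat_eq_def)

lemma nonneg_poly_commute:
  assumes "pos_contraction I B" and "nonneg_poly I B X s" and "nonneg_poly I B Y t"
  shows "mat_eq I (mm I X Y) (mm I Y X)"
  using assms(3)
proof (induction rule: nonneg_poly.induct)
  case (pow n)
  then show ?case using nonneg_poly_commute_pow[OF assms(1,2)] by blast
next
  case (cong Z s Y)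
  have "mat_eq I (mm I X Y) (mm I X Z)" by (rule mm_cong[OF mat_eq_refl mat_eq_sym[OF cong(2)]])
  also have "mat_eq I \<dots> (mm I Z X)" by (rule cong.IH)
  also have "mat_eq I \<dots> (mm I Y X)" by (rule mm_cong[OF cong(2) mat_eq_refl])
  finally show ?case .
qed (simp_all add: mm_add_left mm_add_right mm_scale_left mm_scale_right mat_eq_def)

lemma nonneg_poly_mult_pow:
  assumes "pos_contraction I B" and "nonneg_poly I B Y t"
  shows "nonneg_poly I B (mm I (mat_pow I B i) Y) t"
  using assms(2)
proof (induction rule: nonneg_poly.induct)
  case (pow n)
  have "finite I" using assms(1) by (simp add: pos_contraction_def)
  then show ?case by (rule nonneg_poly.cong[OF nonneg_poly.pow mat_pow_add])
next
  case (cong X s Y)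
  show ?case by (rule nonneg_poly.cong[OF cong.IH mm_cong[OF mat_eq_refl cong(2)]])
qed (simp_all add: mm_add_right mm_scale_right nonneg_poly.intros)

lemma nonneg_poly_mult:
  assumes "pos_contraction I B" and "nonneg_poly I B X s" and "nonneg_poly I B Y t"
  shows "nonneg_poly I B (mm I X Y) (s * t)"
  using assms(2)
proof (induction rule: nonneg_poly.induct)
  case (pow n)
  then show ?case using nonneg_poly_mult_pow[OF assms(1,3)] by simp
next
  case (add X s Y' s')
  then show ?case by (simp add: mm_add_left nonneg_poly.add distrib_right)
next
  case (scale X s r)
  then show ?case by (simp add: mm_scale_left nonneg_poly.scale mult.assoc)
next
  case (cong X s Y)
  show ?case by (rule nonneg_poly.cong[OF cong.IH mm_cong[OF cong(2) mat_eq_refl]])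
qed (simp add: nonneg_poly.zero)

definition gram_contraction :: "'i set \<Rightarrow> ('i \<Rightarrow> 'i \<Rightarrow> complex) \<Rightarrow> ('i \<Rightarrow> 'i \<Rightarrow> complex)" where
  "gram_contraction I X = (\<lambda>a b. id_mat a b - complex_of_real (1 / (frob2 I X + 1)) * mm I (adj X) X a b)"

lemma psd_gram_contraction:
  assumes fin: "finite I"
  shows "psd I (gram_contraction I X)"
  unfolding psd_iff_qform
proof
  fix v
  define c where "c = frob2 I X + 1"
  have c: "c > 0" "frob2 I X \<le> c"
    unfolding c_def frob2_def by (simp_all add: add_nonneg_pos sum_nonneg)
  have "vnorm2 I (mat_vec I X v) \<le> c * vnorm2 I v"
    using vnorm2_mat_vec_le[of I X v] mult_right_mono[OF c(2) vnorm2_nonneg] by (rule order_trans)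
  then have "vnorm2 I (mat_vec I X v) / c \<le> vnorm2 I v"
    using c(1) by (simp add: divide_le_eq mult.commute)
  moreover have "qform I (gram_contraction I X) v = complex_of_real (vnorm2 I v - vnorm2 I (mat_vec I X v) / c)"
    unfolding gram_contraction_def qform_minus qform_scale qform_id_mat[OF fin] qform_gram c_def
    by simp
  ultimately show "Im (qform I (gram_contraction I X) v) = 0 \<and> 0 \<le> Re (qform I (gram_contraction I X) v)"
    by simp
qed

lemma vnorm2_gram_contraction_le:
  assumes fin: "finite I"
  shows "vnorm2 I (mat_vec I (gram_contraction I X) v) \<le> vnorm2 I v"
proof -
  define c where "c = frob2 I X + 1"
  have c: "c > 0" "frob2 I X \<le> c"
    unfolding c_def frob2_def by (simp_all add: add_nonneg_pos sum_nonneg)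
  let ?G = "mm I (adj X) X"
  define n where "n = vnorm2 I (mat_vec I X v)"
  have n: "0 \<le> n / c"
    unfolding n_def using vnorm2_nonneg[of I "mat_vec I X v"] c(1) by simp
  have "vnorm2 I (mat_vec I ?G v) \<le> c * n"
    using vnorm2_mat_vec_le[of I "adj X" "mat_vec I X v"] mult_right_mono[OF c(2) vnorm2_nonneg]
    unfolding mat_vec_mm frob2_adj n_def by (rule order_trans)
  then have G: "vnorm2 I (mat_vec I ?G v) / (c * c) \<le> n / c"
    using c(1) by (simp add: field_simps)
  have "mat_vec I (gram_contraction I X) v a = v a + complex_of_real (- 1 / c) * mat_vec I ?G v a"
    if "a \<in> I" for a
    using mat_vec_id_mat[OF fin that, of v]
    unfolding gram_contraction_def mat_vec_def c_def
    by (simp add: left_diff_distrib sum_subtractf sum_distrib_left mult.assoc sum_negf)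
  then have "vnorm2 I (mat_vec I (gram_contraction I X) v)
      = vnorm2 I (\<lambda>x. v x + complex_of_real (- 1 / c) * mat_vec I ?G v x)"
    by (rule vnorm2_cong)
  also have "\<dots> = vnorm2 I v - 2 * (n / c) + vnorm2 I (mat_vec I ?G v) / (c * c)"
    unfolding vnorm2_add qform_eq_vinner[symmetric] qform_gram n_def by simp
  finally show ?thesis
    using G n by linarith
qed

lemma pos_contraction_gram_contraction: "finite I \<Longrightarrow> pos_contraction I (gram_contraction I X)"
  unfolding pos_contraction_def using psd_gram_contraction vnorm2_gram_contraction_le by blast

text \<open>Monotone iteration \<open>Y(0) = 0\<close>, \<open>Y(k+1) = (B + Y(k)\<^sup>2) / 2\<close>; its limit \<open>Y\<close> satisfies
  \<open>(1 - Y)\<^sup>2 = 1 - B\<close>. The scalar sequence \<open>sqrt_weight\<close> is the same iteration evaluated at \<open>B = 1\<close>.\<close>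

primrec sqrt_iter :: "'i set \<Rightarrow> ('i \<Rightarrow> 'i \<Rightarrow> complex) \<Rightarrow> nat \<Rightarrow> ('i \<Rightarrow> 'i \<Rightarrow> complex)" where
  "sqrt_iter I B 0 = (\<lambda>a b. 0)"
| "sqrt_iter I B (Suc k) = (\<lambda>a b. complex_of_real (1/2) * (B a b + mm I (sqrt_iter I B k) (sqrt_iter I B k) a b))"

primrec sqrt_weight :: "nat \<Rightarrow> real" where
  "sqrt_weight 0 = 0"
| "sqrt_weight (Suc k) = (1 + sqrt_weight k * sqrt_weight k) / 2"

lemma sqrt_weight_le_1: "sqrt_weight k \<le> 1"
proof (induction k)
  case (Suc k)
  moreover have "0 \<le> sqrt_weight k"
    by (cases k) (simp_all add: add_nonneg_nonneg)
  ultimately show ?case by (simp add: mult_le_one)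
qed simp

lemma nonneg_poly_sqrt_iter:
  assumes "pos_contraction I B"
  shows "nonneg_poly I B (sqrt_iter I B k) (sqrt_weight k)"
proof (induction k)
  case 0
  show ?case by (simp add: nonneg_poly.zero)
next
  case (Suc k)
  have "finite I" using assms by (simp add: pos_contraction_def)
  then have "nonneg_poly I B B 1"
    by (rule nonneg_poly.cong[OF nonneg_poly.pow mat_pow_one])
  from nonneg_poly.scale[OF nonneg_poly.add[OF this nonneg_poly_mult[OF assms Suc Suc]], of "1/2"]
  show ?case by (simp add: add_divide_distrib)
qed

text \<open>The increments are nonnegative polynomials too, because
  \<open>Y(k+2) - Y(k+1) = (Y(k+1) + Y(k)) (Y(k+1) - Y(k)) / 2\<close> for the commuting \<open>Y(k)\<close>, \<open>Y(k+1)\<close>.\<close>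

lemma nonneg_poly_sqrt_iter_increment:
  assumes B: "pos_contraction I B"
  shows "nonneg_poly I B (\<lambda>a b. sqrt_iter I B (Suc k) a b - sqrt_iter I B k a b)
           (sqrt_weight (Suc k) - sqrt_weight k)"
proof (induction k)
  case 0
  have "finite I" using B by (simp add: pos_contraction_def)
  then have "nonneg_poly I B B 1"
    by (rule nonneg_poly.cong[OF nonneg_poly.pow mat_pow_one])
  from nonneg_poly.scale[OF this, of "1/2"] show ?case by simp
next
  case (Suc k)
  let ?Y1 = "sqrt_iter I B (Suc k)" and ?Y0 = "sqrt_iter I B k"
  have sum: "nonneg_poly I B (\<lambda>a b. ?Y1 a b + ?Y0 a b) (sqrt_weight (Suc k) + sqrt_weight k)"
    by (rule nonneg_poly.add[OF nonneg_poly_sqrt_iter[OF B] nonneg_poly_sqrt_iter[OF B]])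
  have comm: "mat_eq I (mm I ?Y0 ?Y1) (mm I ?Y1 ?Y0)"
    by (rule nonneg_poly_commute[OF B nonneg_poly_sqrt_iter[OF B] nonneg_poly_sqrt_iter[OF B]])
  let ?prod = "\<lambda>a b. complex_of_real (1/2) * mm I (\<lambda>a b. ?Y1 a b + ?Y0 a b) (\<lambda>a b. ?Y1 a b - ?Y0 a b) a b"
  have P: "nonneg_poly I B ?prod
      ((1/2) * ((sqrt_weight (Suc k) + sqrt_weight k) * (sqrt_weight (Suc k) - sqrt_weight k)))"
    by (rule nonneg_poly.scale[OF nonneg_poly_mult[OF B sum Suc]]) simp
  have E: "mat_eq I ?prod (\<lambda>a b. sqrt_iter I B (Suc (Suc k)) a b - ?Y1 a b)"
    using comm unfolding mat_eq_def mm_add_left mm_diff_right sqrt_iter.simps(2)[of I B "Suc k"]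
    by (simp add: algebra_simps)
  have V: "(1/2) * ((sqrt_weight (Suc k) + sqrt_weight k) * (sqrt_weight (Suc k) - sqrt_weight k))
      = sqrt_weight (Suc (Suc k)) - sqrt_weight (Suc k)"
    unfolding sqrt_weight.simps(2)[of "Suc k"] sqrt_weight.simps(2)[of k, symmetric]
    by (simp add: field_simps)
  show ?case
    using nonneg_poly.cong[OF P E] unfolding V .
qed

lemma qform_sqrt_iter:
  assumes "pos_contraction I B"
  shows "Im (qform I (sqrt_iter I B k) v) = 0"
    and "Re (qform I (sqrt_iter I B k) v) \<le> vnorm2 I v"
    and "Re (qform I (sqrt_iter I B k) v) \<le> Re (qform I (sqrt_iter I B (Suc k)) v)"
proof -
  have Y: "psd I (sqrt_iter I B k)" "Re (qform I (sqrt_iter I B k) v) \<le> sqrt_weight k * vnorm2 I v"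
    using nonneg_poly_psd[OF assms nonneg_poly_sqrt_iter[OF assms]] by blast+
  then show "Im (qform I (sqrt_iter I B k) v) = 0"
    unfolding psd_iff_qform by blast
  show "Re (qform I (sqrt_iter I B k) v) \<le> vnorm2 I v"
    using Y(2) mult_right_mono[OF sqrt_weight_le_1 vnorm2_nonneg, of k I v] by linarith
  have "psd I (\<lambda>a b. sqrt_iter I B (Suc k) a b - sqrt_iter I B k a b)"
    using nonneg_poly_psd[OF assms nonneg_poly_sqrt_iter_increment[OF assms]] by blast
  then show "Re (qform I (sqrt_iter I B k) v) \<le> Re (qform I (sqrt_iter I B (Suc k)) v)"
    unfolding psd_iff_qform qform_minus by auto
qed

lemma convergent_qform_sqrt_iter:
  assumes "pos_contraction I B"
  shows "convergent (\<lambda>k. qform I (sqrt_iter I B k) v)"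
proof -
  define f where "f k = Re (qform I (sqrt_iter I B k) v)" for k
  have "f \<longlonglongrightarrow> (SUP i. f i)"
    unfolding f_def
    by (intro LIMSEQ_incseq_SUP bdd_aboveI2[where M = "vnorm2 I v"] incseq_SucI qform_sqrt_iter[OF assms])
  then have "(\<lambda>k. complex_of_real (f k)) \<longlonglongrightarrow> complex_of_real (SUP i. f i)"
    by (rule tendsto_of_real)
  moreover have "complex_of_real (f k) = qform I (sqrt_iter I B k) v" for k
    unfolding f_def using qform_sqrt_iter(1)[OF assms, of k v] by (simp add: complex_eq_iff)
  ultimately show ?thesis
    unfolding convergent_def by auto
qed

lemma polarization:
  fixes A :: "'i \<Rightarrow> 'i \<Rightarrow> complex"
  assumes "finite I" "a \<in> I" "b \<in> I" "a \<noteq> b"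
  defines "e x \<equiv> qform I A (\<lambda>y. if y = x then 1 else 0)"
  shows "A a b = ((qform I A (\<lambda>x. if x = a then 1 else if x = b then 1 else 0) - e a - e b)
     - \<i> * (qform I A (\<lambda>x. if x = a then 1 else if x = b then \<i> else 0) - e a - e b)) / 2"
  unfolding e_def qform_two_point_vector[OF assms(1-4)] qform_unit_vector[OF assms(1,2)]
    qform_unit_vector[OF assms(1,3)]
  by (simp add: algebra_simps)

lemma convergent_entry_if_convergent_qform:
  assumes "finite I" "a \<in> I" "b \<in> I" "\<And>v. convergent (\<lambda>k. qform I (Y k) v)"
  shows "convergent (\<lambda>k. Y k a b)"
proof (cases "a = b")
  case True
  have "convergent (\<lambda>k. qform I (Y k) (\<lambda>x. if x = a then 1 else 0))"
    by (rule assms(4))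
  then have "convergent (\<lambda>k. Y k a a)"
    unfolding qform_unit_vector[OF assms(1,2)] .
  then show ?thesis
    using True by simp
next
  case False
  from assms(4) obtain l where l: "\<And>v. (\<lambda>k. qform I (Y k) v) \<longlonglongrightarrow> l v"
    unfolding convergent_def by metis
  let ?e = "\<lambda>x y. if y = x then 1 else 0"
  have "(\<lambda>k. ((qform I (Y k) (\<lambda>x. if x = a then 1 else if x = b then 1 else 0)
        - qform I (Y k) (?e a) - qform I (Y k) (?e b))
      - \<i> * (qform I (Y k) (\<lambda>x. if x = a then 1 else if x = b then \<i> else 0)
        - qform I (Y k) (?e a) - qform I (Y k) (?e b))) / 2) \<longlonglongrightarrow>
    ((l (\<lambda>x. if x = a then 1 else if x = b then 1 else 0) - l (?e a) - l (?e b))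
      - \<i> * (l (\<lambda>x. if x = a then 1 else if x = b then \<i> else 0) - l (?e a) - l (?e b))) / 2"
    by (intro tendsto_intros l) simp
  then show ?thesis
    unfolding polarization[OF assms(1-3) False, symmetric] convergent_def by blast
qed

definition sqrt_lim :: "'i set \<Rightarrow> ('i \<Rightarrow> 'i \<Rightarrow> complex) \<Rightarrow> ('i \<Rightarrow> 'i \<Rightarrow> complex)" where
  "sqrt_lim I B = (\<lambda>a b. lim (\<lambda>k. sqrt_iter I B k a b))"

lemma sqrt_iter_tendsto:
  assumes "pos_contraction I B" "a \<in> I" "b \<in> I"
  shows "(\<lambda>k. sqrt_iter I B k a b) \<longlonglongrightarrow> sqrt_lim I B a b"
proof -
  have "finite I" using assms(1) by (simp add: pos_contraction_def)
  from convergent_entry_if_convergent_qform[OF this assms(2,3) convergent_qform_sqrt_iter[OF assms(1)]]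
  show ?thesis unfolding sqrt_lim_def convergent_LIMSEQ_iff .
qed

lemma sqrt_lim_fixpoint:
  assumes "pos_contraction I B" "a \<in> I" "b \<in> I"
  shows "sqrt_lim I B a b = complex_of_real (1/2) * (B a b + mm I (sqrt_lim I B) (sqrt_lim I B) a b)"
proof (rule LIMSEQ_unique)
  show "(\<lambda>k. sqrt_iter I B (Suc k) a b) \<longlonglongrightarrow> sqrt_lim I B a b"
    by (rule LIMSEQ_Suc[OF sqrt_iter_tendsto[OF assms]])
  show "(\<lambda>k. sqrt_iter I B (Suc k) a b) \<longlonglongrightarrow>
      complex_of_real (1/2) * (B a b + mm I (sqrt_lim I B) (sqrt_lim I B) a b)"
    unfolding sqrt_iter.simps mm_def
    by (intro tendsto_intros sqrt_iter_tendsto[OF assms(1)] assms(2,3))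
qed

lemma qform_sqrt_lim:
  assumes "pos_contraction I B"
  shows "Im (qform I (sqrt_lim I B) v) = 0" "Re (qform I (sqrt_lim I B) v) \<le> vnorm2 I v"
proof -
  have lim: "(\<lambda>k. qform I (sqrt_iter I B k) v) \<longlonglongrightarrow> qform I (sqrt_lim I B) v"
    unfolding qform_def by (intro tendsto_intros sqrt_iter_tendsto[OF assms])
  show "Im (qform I (sqrt_lim I B) v) = 0"
    using tendsto_Im[OF lim] qform_sqrt_iter(1)[OF assms] by (simp add: LIMSEQ_const_iff)
  show "Re (qform I (sqrt_lim I B) v) \<le> vnorm2 I v"
    using qform_sqrt_iter(2)[OF assms] by (intro LIMSEQ_le_const2[OF tendsto_Re[OF lim]]) auto
qed

text \<open>With \<open>c = \<parallel>X\<parallel>\<^sub>F\<^sup>2 + 1\<close> and \<open>B = 1 - X\<^sup>* X / c\<close> (a positive contraction), the matrix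
  \<open>\<surd>c (1 - Y)\<close> built from the limit \<open>Y\<close> of the iteration is a positive square root of \<open>X\<^sup>* X\<close>.\<close>

lemma psd_sqrt_exists:
  assumes fin: "finite I"
  shows "\<exists>P. (\<forall>a b. a \<notin> I \<or> b \<notin> I \<longrightarrow> P a b = 0) \<and> psd I P \<and>
            (\<forall>a\<in>I. \<forall>b\<in>I. mm I P P a b = mm I (adj X) X a b)"
proof -
  define c where "c = frob2 I X + 1"
  have c: "c > 0" unfolding c_def frob2_def by (simp add: add_nonneg_pos sum_nonneg)
  define B where "B = gram_contraction I X"
  have B: "pos_contraction I B"
    unfolding B_def by (rule pos_contraction_gram_contraction[OF fin])
  define Y where "Y = sqrt_lim I B"
  define P where "P a b = (if a \<in> I \<and> b \<in> I then complex_of_real (sqrt c) * (id_mat a b - Y a b) else 0)"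
    for a b
  have "psd I (\<lambda>a b. complex_of_real (sqrt c) * (id_mat a b - Y a b))"
    unfolding psd_iff_qform qform_scale qform_minus qform_id_mat[OF fin] Y_def
    using qform_sqrt_lim[OF B] c by (auto intro!: mult_nonneg_nonneg)
  then have "psd I P"
    by (rule psd_cong[rotated]) (simp add: mat_eq_def P_def)
  moreover have "mm I P P a b = mm I (adj X) X a b" if a: "a \<in> I" and b: "b \<in> I" for a b
  proof -
    have sqrt_c: "complex_of_real (sqrt c) * (complex_of_real (sqrt c) * z) = complex_of_real c * z" for z
      using c by (simp flip: mult.assoc of_real_mult)
    have "mm I P P a b = complex_of_real c *
        (mm I id_mat id_mat a b - mm I id_mat Y a b - (mm I Y id_mat a b - mm I Y Y a b))"
      using c a b unfolding P_def mm_def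
      by (simp add: algebra_simps sum_subtractf sum_distrib_left sum.distrib sqrt_c)
    also have "\<dots> = complex_of_real c * (id_mat a b - B a b)"
      using sqrt_lim_fixpoint[OF B a b]
      by (simp add: mm_id_mat_left[OF fin a] mm_id_mat_right[OF fin b] Y_def algebra_simps)
    also have "\<dots> = mm I (adj X) X a b"
      using c unfolding B_def gram_contraction_def c_def[symmetric] by simp
    finally show ?thesis .
  qed
  moreover have "\<forall>a b. a \<notin> I \<or> b \<notin> I \<longrightarrow> P a b = 0"
    unfolding P_def by auto
  ultimately show ?thesis by blast
qed

lemma abs_op_spec:
  assumes "finite I"
  shows "psd I (abs_op I X)" "mat_eq I (mm I (abs_op I X) (abs_op I X)) (mm I (adj X) X)"
proof -
  let ?R = "\<lambda>P. (\<forall>a b. a \<notin> I \<or> b \<notin> I \<longrightarrow> P a b = 0) \<and> psd I P \<and>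
            (\<forall>a\<in>I. \<forall>b\<in>I. mm I P P a b = mm I (adj X) X a b)"
  have "\<exists>!P. ?R P"
  proof (rule ex_ex1I)
    fix P Q assume P: "?R P" and Q: "?R Q"
    then have "mat_eq I P Q"
      using psd_sqrt_unique[OF assms] by (auto simp: mat_eq_def)
    then show "P = Q"
      using P Q unfolding mat_eq_def by (intro ext) metis
  qed (rule psd_sqrt_exists[OF assms])
  from theI'[OF this] show "psd I (abs_op I X)" "mat_eq I (mm I (abs_op I X) (abs_op I X)) (mm I (adj X) X)"
    unfolding abs_op_def mat_eq_def by blast+
qed

definition entries_le :: "'i set \<Rightarrow> ('i \<Rightarrow> 'i \<Rightarrow> complex) \<Rightarrow> real \<Rightarrow> bool" where
  "entries_le I A c \<longleftrightarrow> (\<forall>a\<in>I. \<forall>b\<in>I. cmod (A a b) \<le> c)"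

lemma psd_diag_squared_le:
  assumes "psd I P" "finite I" "a \<in> I"
  shows "0 \<le> Re (P a a)" "(Re (P a a))\<^sup>2 \<le> Re (mm I P P a a)"
proof -
  show nonneg: "0 \<le> Re (P a a)"
    using assms(1) qform_unit_vector[OF assms(2,3), of P] unfolding psd_iff_qform by metis
  have "Re (mm I P P a a) = (\<Sum>x\<in>I. (cmod (P a x))\<^sup>2)"
    using mm_hermitian_diag[OF psd_hermitian[OF assms(1,2)] assms(3)] by simp
  moreover have "(Re (P a a))\<^sup>2 \<le> (cmod (P a a))\<^sup>2"
    using abs_Re_le_cmod[of "P a a"] nonneg by (simp add: power_mono)
  moreover have "(cmod (P a a))\<^sup>2 \<le> (\<Sum>x\<in>I. (cmod (P a x))\<^sup>2)"
    using assms(2,3) by (intro member_le_sum) auto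
  ultimately show "(Re (P a a))\<^sup>2 \<le> Re (mm I P P a a)" by linarith
qed

lemma trace_norm_le_entries:
  assumes fin: "finite I" and "0 \<le> \<delta>" "entries_le I X \<delta>"
  shows "0 \<le> trace_norm I X" "trace_norm I X \<le> real (card I) * (sqrt (real (card I)) * \<delta>)"
proof -
  let ?P = "abs_op I X"
  have diag: "0 \<le> Re (?P a a) \<and> Re (?P a a) \<le> sqrt (real (card I)) * \<delta>" if a: "a \<in> I" for a
  proof -
    have sq: "cnj (X c a) * X c a = complex_of_real ((cmod (X c a))\<^sup>2)" for c
      by (metis complex_norm_square mult.commute)
    have "(Re (?P a a))\<^sup>2 \<le> Re (mm I ?P ?P a a)"
      by (rule psd_diag_squared_le(2)[OF abs_op_spec(1)[OF fin] fin a])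
    also have "\<dots> = Re (mm I (adj X) X a a)"
      using abs_op_spec(2)[OF fin, of X] a unfolding mat_eq_def by simp
    also have "\<dots> = (\<Sum>c\<in>I. (cmod (X c a))\<^sup>2)"
      unfolding mm_def adj_def sq Re_sum Re_complex_of_real ..
    also have "\<dots> \<le> (\<Sum>c\<in>I. \<delta>\<^sup>2)"
      using assms(2,3) a unfolding entries_le_def by (intro sum_mono power_mono) auto
    also have "\<dots> = (sqrt (real (card I)) * \<delta>)\<^sup>2"
      by (simp add: power_mult_distrib)
    finally have "(Re (?P a a))\<^sup>2 \<le> (sqrt (real (card I)) * \<delta>)\<^sup>2" .
    then show ?thesis
      using psd_diag_squared_le(1)[OF abs_op_spec(1)[OF fin] fin a] assms(2)
      by (auto intro: power2_le_imp_le)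
  qed
  have "trace_norm I X = (\<Sum>a\<in>I. Re (?P a a))"
    unfolding trace_norm_def tr_def by (simp add: Re_sum)
  then show "0 \<le> trace_norm I X" "trace_norm I X \<le> real (card I) * (sqrt (real (card I)) * \<delta>)"
    using sum_nonneg[of I "\<lambda>a. Re (?P a a)"] sum_mono[of I "\<lambda>a. Re (?P a a)" "\<lambda>_. sqrt (real (card I)) * \<delta>"]
      diag by auto
qed

section \<open>Perturbation of the exponential series\<close>

definition l1norm :: "'i set \<Rightarrow> ('i \<Rightarrow> 'i \<Rightarrow> complex) \<Rightarrow> real" where
  "l1norm I X = (\<Sum>a\<in>I. \<Sum>b\<in>I. cmod (X a b))"

lemma l1norm_nonneg: "0 \<le> l1norm I X"
  unfolding l1norm_def by (simp add: sum_nonneg)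

lemma l1norm_zero [simp]: "l1norm I (\<lambda>a b. 0) = 0"
  unfolding l1norm_def by simp

lemma l1norm_uminus [simp]: "l1norm I (\<lambda>a b. - X a b) = l1norm I X"
  unfolding l1norm_def by simp

lemma l1norm_cong: "(\<And>a b. a \<in> I \<Longrightarrow> b \<in> I \<Longrightarrow> X a b = Y a b) \<Longrightarrow> l1norm I X = l1norm I Y"
  unfolding l1norm_def by (auto intro!: sum.cong)

lemma cmod_le_l1norm:
  assumes "finite I" "a \<in> I" "b \<in> I"
  shows "cmod (X a b) \<le> l1norm I X"
proof -
  have "cmod (X a b) \<le> (\<Sum>b\<in>I. cmod (X a b))"
    using assms by (intro member_le_sum) auto
  also have "\<dots> \<le> l1norm I X"
    unfolding l1norm_def using assms by (intro member_le_sum) (auto intro: sum_nonneg)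
  finally show ?thesis .
qed

lemma l1norm_add_le: "l1norm I (\<lambda>a b. X a b + Y a b) \<le> l1norm I X + l1norm I Y"
  unfolding l1norm_def by (simp add: sum.distrib[symmetric] sum_mono norm_triangle_ineq)

lemma l1norm_diff_le: "l1norm I (\<lambda>a b. X a b - Y a b) \<le> l1norm I X + l1norm I Y"
  unfolding l1norm_def by (simp add: sum.distrib[symmetric] sum_mono norm_triangle_ineq4)

lemma l1norm_scale: "l1norm I (\<lambda>a b. r * X a b) = cmod r * l1norm I X"
  unfolding l1norm_def by (simp add: norm_mult sum_distrib_left)

lemma l1norm_divide_le: "cmod (inverse z) \<le> 1 \<Longrightarrow> l1norm I (\<lambda>a b. X a b / z) \<le> l1norm I X"
  using l1norm_scale[of I "inverse z" X] mult_right_mono[OF _ l1norm_nonneg, of "cmod (inverse z)" 1 I X]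
  by (simp add: divide_inverse mult.commute)

lemma l1norm_add_scale_le: "l1norm I (\<lambda>a b. X a b + r * Y a b) \<le> l1norm I X + cmod r * l1norm I Y"
  using l1norm_add_le[of I X "\<lambda>a b. r * Y a b"] unfolding l1norm_scale .

lemma l1norm_sum_le: "l1norm I (\<lambda>a b. \<Sum>k\<in>S. F k a b) \<le> (\<Sum>k\<in>S. l1norm I (F k))"
proof -
  have "l1norm I (\<lambda>a b. \<Sum>k\<in>S. F k a b) \<le> (\<Sum>a\<in>I. \<Sum>b\<in>I. \<Sum>k\<in>S. cmod (F k a b))"
    unfolding l1norm_def by (intro sum_mono norm_sum)
  also have "\<dots> = (\<Sum>k\<in>S. l1norm I (F k))"
    unfolding l1norm_def by (simp add: sum.swap[of _ S])
  finally show ?thesis .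
qed

lemma l1norm_mm_left_le:
  assumes "entries_le I A c"
  shows "l1norm I (mm I A X) \<le> c * real (card I) * l1norm I X"
proof -
  have "l1norm I (mm I A X) \<le> (\<Sum>a\<in>I. \<Sum>b\<in>I. \<Sum>x\<in>I. c * cmod (X x b))"
    unfolding l1norm_def mm_def
  proof (intro sum_mono)
    fix a b assume "a \<in> I"
    then have "cmod (A a x * X x b) \<le> c * cmod (X x b)" if "x \<in> I" for x
      using assms that unfolding entries_le_def by (simp add: norm_mult mult_right_mono)
    then show "cmod (\<Sum>x\<in>I. A a x * X x b) \<le> (\<Sum>x\<in>I. c * cmod (X x b))"
      by (intro order_trans[OF norm_sum] sum_mono)
  qed
  also have "\<dots> = real (card I) * (c * (\<Sum>b\<in>I. \<Sum>x\<in>I. cmod (X x b)))"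
    by (simp add: sum_distrib_left)
  also have "(\<Sum>b\<in>I. \<Sum>x\<in>I. cmod (X x b)) = l1norm I X"
    unfolding l1norm_def by (rule sum.swap)
  finally show ?thesis by (simp add: mult_ac)
qed

lemma l1norm_mm_right_le:
  assumes "entries_le I A c"
  shows "l1norm I (mm I X A) \<le> c * real (card I) * l1norm I X"
proof -
  have "l1norm I (mm I X A) \<le> (\<Sum>a\<in>I. \<Sum>b\<in>I. \<Sum>x\<in>I. c * cmod (X a x))"
    unfolding l1norm_def mm_def
  proof (intro sum_mono)
    fix a b assume "b \<in> I"
    then have "cmod (X a x * A x b) \<le> c * cmod (X a x)" if "x \<in> I" for x
      using assms that unfolding entries_le_def norm_mult
      by (simp add: mult.commute[of "cmod (X a x)"] mult_right_mono)
    then show "cmod (\<Sum>x\<in>I. X a x * A x b) \<le> (\<Sum>x\<in>I. c * cmod (X a x))"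
      by (intro order_trans[OF norm_sum] sum_mono)
  qed
  also have "\<dots> = c * real (card I) * l1norm I X"
    unfolding l1norm_def by (simp add: sum_distrib_left mult_ac)
  finally show ?thesis .
qed

lemma entries_le_mm:
  assumes "entries_le I A c1" "entries_le I B c2" "0 \<le> c1"
  shows "entries_le I (mm I A B) (real (card I) * c1 * c2)"
  unfolding entries_le_def
proof (intro ballI)
  fix a b assume "a \<in> I" "b \<in> I"
  then have "cmod (mm I A B a b) \<le> (\<Sum>x\<in>I. c1 * c2)"
    using assms unfolding mm_def entries_le_def
    by (intro order_trans[OF norm_sum] sum_mono) (simp add: norm_mult mult_mono)
  then show "cmod (mm I A B a b) \<le> real (card I) * c1 * c2" by simp
qed

lemma entries_le_adj: "entries_le I A c \<Longrightarrow> entries_le I (adj A) c"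
  unfolding entries_le_def adj_def by simp

lemma entries_le_add: "entries_le I A c1 \<Longrightarrow> entries_le I B c2 \<Longrightarrow> entries_le I (\<lambda>a b. A a b + B a b) (c1 + c2)"
  unfolding entries_le_def by (meson add_mono norm_triangle_le)

lemma l1norm_comm_le:
  assumes "entries_le I A c"
  shows "l1norm I (comm I A X) \<le> 2 * c * real (card I) * l1norm I X"
proof -
  have "l1norm I (comm I A X) \<le> l1norm I (mm I A X) + l1norm I (mm I X A)"
    unfolding comm_def by (rule l1norm_diff_le)
  also have "\<dots> \<le> c * real (card I) * l1norm I X + c * real (card I) * l1norm I X"
    by (intro add_mono l1norm_mm_left_le l1norm_mm_right_le assms)
  finally show ?thesis by simp
qed

lemma l1norm_dterm_le:
  assumes "entries_le I A c" "entries_le I B c" "0 \<le> c"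
  shows "l1norm I (dterm I A B X) \<le> 2 * (c * real (card I))\<^sup>2 * l1norm I X"
proof -
  let ?n = "real (card I)" and ?BA = "mm I (adj B) A"
  have BA: "entries_le I ?BA (?n * c * c)"
    by (rule entries_le_mm[OF entries_le_adj[OF assms(2)] assms(1,3)])
  have "l1norm I (mm I (mm I A X) (adj B)) \<le> c * ?n * l1norm I (mm I A X)"
    by (rule l1norm_mm_right_le[OF entries_le_adj[OF assms(2)]])
  also have "\<dots> \<le> c * ?n * (c * ?n * l1norm I X)"
    using assms(3) by (intro mult_left_mono l1norm_mm_left_le[OF assms(1)]) simp
  finally have 1: "l1norm I (mm I (mm I A X) (adj B)) \<le> (c * ?n)\<^sup>2 * l1norm I X"
    by (simp add: power2_eq_square mult_ac)
  have 2: "l1norm I (mm I ?BA X) \<le> (c * ?n)\<^sup>2 * l1norm I X"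
    using l1norm_mm_left_le[OF BA, of X] by (simp add: power2_eq_square mult_ac)
  have 3: "l1norm I (mm I X ?BA) \<le> (c * ?n)\<^sup>2 * l1norm I X"
    using l1norm_mm_right_le[OF BA, of X] by (simp add: power2_eq_square mult_ac)
  have "l1norm I (dterm I A B X)
      \<le> l1norm I (mm I (mm I A X) (adj B)) + l1norm I (\<lambda>a b. (1/2) * (mm I ?BA X a b + mm I X ?BA a b))"
    unfolding dterm_def by (rule l1norm_diff_le)
  also have "\<dots> \<le> l1norm I (mm I (mm I A X) (adj B)) + (1/2) * (l1norm I (mm I ?BA X) + l1norm I (mm I X ?BA))"
    unfolding l1norm_scale by (simp add: l1norm_add_le)
  finally have "l1norm I (dterm I A B X) \<le> 2 * ((c * ?n)\<^sup>2 * l1norm I X)"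
    using 1 2 3 by argo
  then show ?thesis by (simp add: mult.assoc)
qed

lemma l1norm_funpow_le:
  assumes "\<And>X. l1norm I (\<Phi> X) \<le> K * l1norm I X" "0 \<le> K"
  shows "l1norm I ((\<Phi> ^^ n) X) \<le> K ^ n * l1norm I X"
proof (induction n)
  case (Suc n)
  have "l1norm I ((\<Phi> ^^ Suc n) X) \<le> K * l1norm I ((\<Phi> ^^ n) X)"
    using assms(1) by simp
  also have "\<dots> \<le> K * (K ^ n * l1norm I X)"
    by (rule mult_left_mono[OF Suc assms(2)])
  finally show ?case by (simp add: mult.assoc)
qed simp

text \<open>Duhamel-type recursion: \<open>\<Phi> = \<Psi> + e P\<close> and linearity of \<open>\<Phi>\<close> give
  \<open>\<Phi>^(n+1) X - \<Psi>^(n+1) X = \<Phi> (\<Phi>^n X - \<Psi>^n X) + e P (\<Psi>^n X)\<close>.\<close>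

lemma l1norm_funpow_diff_le:
  assumes lin: "\<And>X Y a b. \<Phi> (\<lambda>a b. X a b - Y a b) a b = \<Phi> X a b - \<Phi> Y a b"
    and split: "\<And>X a b. a \<in> I \<Longrightarrow> b \<in> I \<Longrightarrow> \<Phi> X a b = \<Psi> X a b + e * P X a b"
    and \<Phi>: "\<And>X. l1norm I (\<Phi> X) \<le> K * l1norm I X"
    and \<Psi>: "\<And>X. l1norm I (\<Psi> X) \<le> K * l1norm I X"
    and P: "\<And>X. l1norm I (P X) \<le> K * l1norm I X"
    and K: "0 \<le> K"
  shows "l1norm I (\<lambda>a b. (\<Phi> ^^ n) X a b - (\<Psi> ^^ n) X a b) \<le> real n * K ^ n * (cmod e * l1norm I X)"
proof (induction n)
  case (Suc n)
  define E where "E = cmod e * l1norm I X"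
  have E: "0 \<le> E" unfolding E_def by (simp add: l1norm_nonneg)
  let ?D = "\<lambda>a b. (\<Phi> ^^ n) X a b - (\<Psi> ^^ n) X a b"
  have "l1norm I (\<lambda>a b. (\<Phi> ^^ Suc n) X a b - (\<Psi> ^^ Suc n) X a b)
      = l1norm I (\<lambda>a b. \<Phi> ?D a b + e * P ((\<Psi> ^^ n) X) a b)"
    by (intro l1norm_cong) (simp add: lin split)
  also have "\<dots> \<le> l1norm I (\<Phi> ?D) + cmod e * l1norm I (P ((\<Psi> ^^ n) X))"
    by (rule l1norm_add_scale_le)
  also have "\<dots> \<le> K * (real n * K ^ n * E) + cmod e * (K * (K ^ n * l1norm I X))"
  proof (rule add_mono)
    show "l1norm I (\<Phi> ?D) \<le> K * (real n * K ^ n * E)"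
      using \<Phi>[of ?D] mult_left_mono[OF Suc[folded E_def] K] by (rule order_trans)
    have "l1norm I (P ((\<Psi> ^^ n) X)) \<le> K * (K ^ n * l1norm I X)"
      using P mult_left_mono[OF l1norm_funpow_le[OF \<Psi> K] K] by (rule order_trans)
    then show "cmod e * l1norm I (P ((\<Psi> ^^ n) X)) \<le> cmod e * (K * (K ^ n * l1norm I X))"
      by (rule mult_left_mono) simp
  qed
  finally show ?case
    unfolding E_def by (simp add: algebra_simps)
qed simp

lemma norm_exp_coeff_mult:
  assumes "0 \<le> t"
  shows "cmod (complex_of_real (t ^ n / fact n) * z) = t ^ n / fact n * cmod z"
proof -
  have "0 \<le> t ^ n / fact n" using assms by simp
  then show ?thesis by (simp only: norm_mult norm_of_real abs_of_nonneg)
qed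

lemma summable_sexp_series:
  assumes "finite I" "a \<in> I" "b \<in> I" "0 \<le> t" "0 \<le> K"
    and "\<And>X. l1norm I (\<Phi> X) \<le> K * l1norm I X"
  shows "summable (\<lambda>n. complex_of_real (t ^ n / fact n) * (\<Phi> ^^ n) X a b)"
proof (rule summable_comparison_test)
  show "summable (\<lambda>n. l1norm I X * ((K * t) ^ n / fact n))"
    using exp_converges[of "K * t"] by (intro summable_mult sums_summable) (auto simp: divide_inverse mult.commute)
  have "norm (complex_of_real (t ^ n / fact n) * (\<Phi> ^^ n) X a b) \<le> l1norm I X * ((K * t) ^ n / fact n)"
    for n
  proof -
    have "cmod ((\<Phi> ^^ n) X a b) \<le> K ^ n * l1norm I X"
      using cmod_le_l1norm[OF assms(1-3)] l1norm_funpow_le[OF assms(6,5)] by (rule order_trans)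
    then have "t ^ n / fact n * cmod ((\<Phi> ^^ n) X a b) \<le> t ^ n / fact n * (K ^ n * l1norm I X)"
      using assms(4) by (intro mult_left_mono) auto
    then show ?thesis
      unfolding norm_exp_coeff_mult[OF assms(4)] by (simp add: power_mult_distrib mult_ac)
  qed
  then show "\<exists>N. \<forall>n\<ge>N. norm (complex_of_real (t ^ n / fact n) * (\<Phi> ^^ n) X a b)
      \<le> l1norm I X * ((K * t) ^ n / fact n)"
    by blast
qed

lemma exp_series_term_diff_le:
  assumes "finite I" "a \<in> I" "b \<in> I" "0 \<le> t"
    and lin: "\<And>X Y a b. \<Phi> (\<lambda>a b. X a b - Y a b) a b = \<Phi> X a b - \<Phi> Y a b"
    and split: "\<And>X a b. a \<in> I \<Longrightarrow> b \<in> I \<Longrightarrow> \<Phi> X a b = \<Psi> X a b + e * P X a b"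
    and \<Phi>: "\<And>X. l1norm I (\<Phi> X) \<le> K * l1norm I X"
    and \<Psi>: "\<And>X. l1norm I (\<Psi> X) \<le> K * l1norm I X"
    and P: "\<And>X. l1norm I (P X) \<le> K * l1norm I X"
    and K: "0 \<le> K"
  shows "cmod (complex_of_real (t ^ n / fact n) * ((\<Phi> ^^ n) X a b - (\<Psi> ^^ n) X a b))
    \<le> cmod e * l1norm I X * ((2 * K * t) ^ n / fact n)"
proof -
  define E where "E = cmod e * l1norm I X"
  have "cmod ((\<Phi> ^^ n) X a b - (\<Psi> ^^ n) X a b) \<le> l1norm I (\<lambda>a b. (\<Phi> ^^ n) X a b - (\<Psi> ^^ n) X a b)"
    by (rule cmod_le_l1norm[OF assms(1-3)])
  also have "\<dots> \<le> real n * K ^ n * E"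
    unfolding E_def by (rule l1norm_funpow_diff_le[OF lin split \<Phi> \<Psi> P K])
  also have "\<dots> \<le> 2 ^ n * K ^ n * E"
  proof -
    have "real n \<le> 2 ^ n"
      by (metis of_nat_le_iff of_nat_numeral of_nat_power less_exp less_imp_le)
    then show ?thesis
      using K by (intro mult_right_mono) (simp_all add: E_def l1norm_nonneg)
  qed
  finally have "t ^ n / fact n * cmod ((\<Phi> ^^ n) X a b - (\<Psi> ^^ n) X a b)
      \<le> t ^ n / fact n * (2 ^ n * K ^ n * E)"
    using assms(4) by (intro mult_left_mono) auto
  then show ?thesis
    unfolding norm_exp_coeff_mult[OF assms(4)] E_def by (simp add: power_mult_distrib mult_ac)
qed

lemma sexp_perturbation_le:
  assumes "finite I" "a \<in> I" "b \<in> I" "0 \<le> t"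
    and lin: "\<And>X Y a b. \<Phi> (\<lambda>a b. X a b - Y a b) a b = \<Phi> X a b - \<Phi> Y a b"
    and split: "\<And>X a b. a \<in> I \<Longrightarrow> b \<in> I \<Longrightarrow> \<Phi> X a b = \<Psi> X a b + e * P X a b"
    and \<Phi>: "\<And>X. l1norm I (\<Phi> X) \<le> K * l1norm I X"
    and \<Psi>: "\<And>X. l1norm I (\<Psi> X) \<le> K * l1norm I X"
    and P: "\<And>X. l1norm I (P X) \<le> K * l1norm I X"
    and K: "0 \<le> K"
  shows "cmod (sexp t \<Phi> X a b - sexp t \<Psi> X a b) \<le> cmod e * l1norm I X * exp (2 * K * t)"
proof -
  define E where "E = cmod e * l1norm I X"
  have exp: "(\<lambda>n. E * ((2 * K * t) ^ n / fact n)) sums (E * exp (2 * K * t))"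
    using exp_converges[of "2 * K * t"] by (intro sums_mult) (simp add: divide_inverse mult.commute)
  have "sexp t \<Phi> X a b - sexp t \<Psi> X a b
      = (\<Sum>n. complex_of_real (t ^ n / fact n) * ((\<Phi> ^^ n) X a b - (\<Psi> ^^ n) X a b))"
    unfolding sexp_def right_diff_distrib
    using suminf_diff[OF summable_sexp_series[OF assms(1-4) K \<Phi>] summable_sexp_series[OF assms(1-4) K \<Psi>]]
    by simp
  also have "cmod \<dots> \<le> (\<Sum>n. E * ((2 * K * t) ^ n / fact n))"
    unfolding E_def
    by (intro norm_suminf_le[OF _ sums_summable[OF exp[unfolded E_def]]]
        exp_series_term_diff_le[OF assms(1-4) lin split \<Phi> \<Psi> P K])
  also have "\<dots> = E * exp (2 * K * t)"
    using exp by (rule sums_unique[symmetric])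
  finally show ?thesis
    unfolding E_def .
qed

lemma trace_norm_sexp_perturbation_tendsto_0:
  fixes \<Phi> \<Psi> P :: "nat \<Rightarrow> ('i \<Rightarrow> 'i \<Rightarrow> complex) \<Rightarrow> ('i \<Rightarrow> 'i \<Rightarrow> complex)" and \<epsilon> :: "nat \<Rightarrow> complex"
  assumes fin: "finite I" and t: "0 \<le> t" and K: "0 \<le> K" and \<epsilon>: "\<epsilon> \<longlonglongrightarrow> 0"
    and lin: "\<And>L X Y a b. \<Phi> L (\<lambda>a b. X a b - Y a b) a b = \<Phi> L X a b - \<Phi> L Y a b"
    and split: "\<And>L X a b. \<Phi> L X a b = \<Psi> L X a b + \<epsilon> L * P L X a b"
    and \<Psi>: "\<And>L X. l1norm I (\<Psi> L X) \<le> K * l1norm I X"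
    and P: "\<And>L X. l1norm I (P L X) \<le> K * l1norm I X"
  shows "(\<lambda>L. trace_norm I (\<lambda>a b. sexp t (\<Phi> L) Q a b - sexp t (\<Psi> L) Q a b)) \<longlonglongrightarrow> 0"
proof (rule tendsto_sandwich)
  define C where "C = real (card I) * (sqrt (real (card I)) * (l1norm I Q * exp (2 * (2 * K) * t)))"
  let ?tn = "\<lambda>L. trace_norm I (\<lambda>a b. sexp t (\<Phi> L) Q a b - sexp t (\<Psi> L) Q a b)"
  have bound: "0 \<le> ?tn L \<and> ?tn L \<le> C * cmod (\<epsilon> L)" if small: "cmod (\<epsilon> L) \<le> 1" for L
  proof -
    have \<Phi>: "l1norm I (\<Phi> L X) \<le> 2 * K * l1norm I X" for X
    proof -
      have "l1norm I (\<Phi> L X) \<le> l1norm I (\<Psi> L X) + cmod (\<epsilon> L) * l1norm I (P L X)"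
        unfolding split by (rule l1norm_add_scale_le)
      also have "\<dots> \<le> K * l1norm I X + 1 * (K * l1norm I X)"
        using small \<Psi> P K by (intro add_mono mult_mono) (auto simp: l1norm_nonneg)
      finally show ?thesis by simp
    qed
    have le_2K: "K * l1norm I X \<le> 2 * K * l1norm I X" for X
      using K by (simp add: l1norm_nonneg mult_right_mono)
    have "entries_le I (\<lambda>a b. sexp t (\<Phi> L) Q a b - sexp t (\<Psi> L) Q a b)
        (cmod (\<epsilon> L) * l1norm I Q * exp (2 * (2 * K) * t))"
      unfolding entries_le_def
      using sexp_perturbation_le[OF fin _ _ t lin split \<Phi> order_trans[OF \<Psi> le_2K] order_trans[OF P le_2K]] K
      by simp
    from trace_norm_le_entries[OF fin _ this]
    show ?thesis unfolding C_def by (simp add: l1norm_nonneg mult_ac)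
  qed
  have "\<forall>\<^sub>F L in sequentially. cmod (\<epsilon> L) < 1"
    using order_tendstoD(2)[OF tendsto_norm_zero[OF \<epsilon>]] by simp
  then show "\<forall>\<^sub>F L in sequentially. 0 \<le> ?tn L" "\<forall>\<^sub>F L in sequentially. ?tn L \<le> C * cmod (\<epsilon> L)"
    by (auto elim!: eventually_mono dest!: bound[OF less_imp_le])
  show "(\<lambda>L. C * cmod (\<epsilon> L)) \<longlonglongrightarrow> 0"
    by (rule tendsto_mult_right_zero[OF tendsto_norm_zero[OF \<epsilon>]])
qed simp

section \<open>Divergence of the Kac factor\<close>

lemma Gamma_eq_lists: "Gamma d M = {xs. set xs \<subseteq> {1..M} \<and> length xs = d}"
  unfolding Gamma_def by (auto simp: in_set_conv_nth subset_iff)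

lemma finite_Gamma: "finite (Gamma d M)"
  unfolding Gamma_eq_lists by (rule finite_lists_length_eq) simp

lemma card_Gamma: "card (Gamma d M) = M ^ d"
  unfolding Gamma_eq_lists by (subst card_lists_length_eq) simp_all

lemma Gamma_mono: "M \<le> M' \<Longrightarrow> Gamma d M \<subseteq> Gamma d M'"
  unfolding Gamma_def by auto

lemma gnorm_origin_bounds:
  assumes d: "1 \<le> d" and r: "r \<in> Gamma d M" and "M < L"
  shows "1 \<le> gnorm per L d r (replicate d 0)" "gnorm per L d r (replicate d 0) \<le> sqrt (real d) * real M"
proof -
  define S where "S = (\<Sum>i<d. (cdist per L (r ! i) (replicate d 0 ! i))\<^sup>2)"
  have coord: "1 \<le> cdist per L (r ! i) (replicate d 0 ! i) \<and> cdist per L (r ! i) (replicate d 0 ! i) \<le> real M"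
    if "i < d" for i
    using r that \<open>M < L\<close> unfolding Gamma_def cdist_def by (auto simp: min_def)
  have "1 \<le> (cdist per L (r ! 0) (replicate d 0 ! 0))\<^sup>2"
    using coord[of 0] d by simp
  also have "\<dots> \<le> S"
    unfolding S_def using d by (intro member_le_sum) auto
  finally show "1 \<le> gnorm per L d r (replicate d 0)"
    unfolding gnorm_def S_def[symmetric] by simp
  have "(cdist per L (r ! i) (replicate d 0 ! i))\<^sup>2 \<le> (real M)\<^sup>2" if "i < d" for i
    using coord[OF that] by (intro power_mono) auto
  then have "S \<le> (\<Sum>i<d. (real M)\<^sup>2)"
    unfolding S_def by (intro sum_mono) auto
  then have "sqrt S \<le> sqrt ((sqrt (real d) * real M)\<^sup>2)"
    by (simp add: power_mult_distrib)
  then show "gnorm per L d r (replicate d 0) \<le> sqrt (real d) * real M"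
    unfolding gnorm_def S_def[symmetric] by simp
qed

text \<open>Each dyadic shell \<open>\<Gamma>(2^(j+1)) - \<Gamma>(2^j)\<close> contributes at least a constant to the Kac factor:
  it contains \<open>(2^d - 1) 2^(j d) \<ge> 2^((j+1) d) / 2\<close> sites, each at distance at most \<open>\<surd>d 2^(j+1)\<close>
  from the origin, and \<open>\<alpha> \<le> d\<close>.\<close>

lemma card_Gamma_dyadic_shell:
  "real (card (Gamma d (2 ^ Suc j) - Gamma d (2 ^ j))) = (2 ^ d - 1) * (2 ^ j) ^ d"
proof -
  have "Gamma d (2 ^ j) \<subseteq> Gamma d (2 ^ Suc j)"
    by (rule Gamma_mono) simp
  then have "card (Gamma d (2 ^ Suc j) - Gamma d (2 ^ j)) = (2 ^ Suc j) ^ d - (2 ^ j) ^ d"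
    by (simp only: card_Diff_subset[OF finite_Gamma] card_Gamma)
  moreover have "(2 ^ j) ^ d \<le> ((2::nat) ^ Suc j) ^ d"
    by (intro power_mono) auto
  ultimately have "real (card (Gamma d (2 ^ Suc j) - Gamma d (2 ^ j))) = (2 * 2 ^ j) ^ d - (2 ^ j) ^ d"
    by (simp add: of_nat_diff)
  also have "\<dots> = (2 ^ d - 1) * (2 ^ j) ^ d"
    by (simp add: power_mult_distrib left_diff_distrib)
  finally show ?thesis .
qed

lemma dyadic_shell_weight_ge:
  assumes "1 \<le> d"
  shows "1 / (2 * sqrt (real d) ^ d)
    \<le> real (card (Gamma d (2 ^ Suc j) - Gamma d (2 ^ j))) / (sqrt (real d) * 2 ^ Suc j) ^ d"
proof -
  define N :: real where "N = (2 ^ j) ^ d"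
  have N: "0 < N" unfolding N_def by simp
  have "(2::real) \<le> 2 ^ d"
    using assms by (metis power_one_right power_increasing one_le_numeral)
  then have "2 * N \<le> 2 ^ d * N"
    using N by (intro mult_right_mono) auto
  then have "1 / 2 \<le> (2 ^ d - 1) * N / (2 ^ d * N)"
    using N by (simp add: field_simps)
  then have "1 / 2 / sqrt (real d) ^ d \<le> (2 ^ d - 1) * N / (2 ^ d * N) / sqrt (real d) ^ d"
    by (rule divide_right_mono) simp
  also have "\<dots> = real (card (Gamma d (2 ^ Suc j) - Gamma d (2 ^ j))) / (sqrt (real d) * 2 ^ Suc j) ^ d"
    unfolding card_Gamma_dyadic_shell N_def divide_divide_eq_left
    by (simp add: power_mult_distrib mult_ac)
  finally show ?thesis by simp
qed

lemma kac_shell_ge: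
  assumes d: "1 \<le> d" and "0 \<le> \<alpha>" "\<alpha> \<le> real d" and L: "2 ^ Suc j < L"
  shows "1 / (2 * sqrt (real d) ^ d)
    \<le> (\<Sum>r\<in>Gamma d (2 ^ Suc j) - Gamma d (2 ^ j). gnorm per L d r (replicate d 0) powr (- \<alpha>))"
proof -
  define s where "s = sqrt (real d) * 2 ^ Suc j"
  have "(1::real) \<le> 2 ^ Suc j"
    by (rule one_le_power) simp
  then have "1 * 1 \<le> sqrt (real d) * 2 ^ Suc j"
    using d by (intro mult_mono) auto
  then have s: "1 \<le> s"
    unfolding s_def by simp
  have point: "inverse (s ^ d) \<le> gnorm per L d r (replicate d 0) powr (- \<alpha>)"
    if "r \<in> Gamma d (2 ^ Suc j)" for r
  proof -
    let ?g = "gnorm per L d r (replicate d 0)"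
    have g: "1 \<le> ?g" "?g \<le> s"
      using gnorm_origin_bounds[OF d that L, of per] unfolding s_def by auto
    have "inverse (s ^ d) = s powr (- real d)"
      using s by (simp add: powr_minus powr_realpow)
    also have "\<dots> \<le> s powr (- \<alpha>)"
      using assms(3) s by (intro powr_mono) auto
    also have "\<dots> \<le> ?g powr (- \<alpha>)"
      using assms(2) g by (intro powr_mono2') auto
    finally show ?thesis .
  qed
  have "1 / (2 * sqrt (real d) ^ d) \<le> real (card (Gamma d (2 ^ Suc j) - Gamma d (2 ^ j))) / s ^ d"
    using dyadic_shell_weight_ge[OF d, of j] unfolding s_def .
  also have "\<dots> = (\<Sum>r\<in>Gamma d (2 ^ Suc j) - Gamma d (2 ^ j). inverse (s ^ d))"
    by (simp only: sum_constant divide_inverse)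
  also have "\<dots> \<le> (\<Sum>r\<in>Gamma d (2 ^ Suc j) - Gamma d (2 ^ j). gnorm per L d r (replicate d 0) powr (- \<alpha>))"
    by (intro sum_mono point) simp
  finally show ?thesis .
qed

lemma kac_ge:
  assumes "1 \<le> d" "0 \<le> \<alpha>" "\<alpha> \<le> real d" and "2 ^ k < L"
  shows "real k / (2 * sqrt (real d) ^ d) \<le> kac per d \<alpha> L"
proof -
  have "real k / (2 * sqrt (real d) ^ d)
      \<le> (\<Sum>r\<in>Gamma d (2 ^ k). gnorm per L d r (replicate d 0) powr (- \<alpha>))"
    using assms(4)
  proof (induction k)
    case (Suc k)
    have "2 ^ k < L"
      using Suc.prems by (meson le_less_trans one_le_numeral power_increasing le_SucI order_refl
          power_strict_increasing_iff lessI)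
    have "(\<Sum>r\<in>Gamma d (2 ^ Suc k). gnorm per L d r (replicate d 0) powr (- \<alpha>)) =
        (\<Sum>r\<in>Gamma d (2 ^ Suc k) - Gamma d (2 ^ k). gnorm per L d r (replicate d 0) powr (- \<alpha>)) +
        (\<Sum>r\<in>Gamma d (2 ^ k). gnorm per L d r (replicate d 0) powr (- \<alpha>))"
      by (intro sum.subset_diff Gamma_mono finite_Gamma) simp
    then show ?case
      using kac_shell_ge[OF assms(1-3) Suc.prems, of per] Suc.IH[OF \<open>2 ^ k < L\<close>]
      by (simp add: add_divide_distrib)
  qed (simp add: sum_nonneg)
  also have "\<dots> \<le> kac per d \<alpha> L"
    unfolding kac_def using assms(4) by (intro sum_mono2 finite_Gamma Gamma_mono) auto
  finally show ?thesis .
qed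

lemma kac_tendsto_at_top:
  assumes "1 \<le> d" "0 \<le> \<alpha>" "\<alpha> \<le> real d"
  shows "filterlim (kac per d \<alpha>) at_top sequentially"
  unfolding filterlim_at_top
proof
  fix Z :: real
  define c where "c = 2 * sqrt (real d) ^ d"
  have "c > 0" unfolding c_def using assms(1) by simp
  obtain k :: nat where k: "Z * c < real k"
    using reals_Archimedean2 by blast
  have "Z \<le> real k / c"
    using k \<open>c > 0\<close> by (simp add: pos_le_divide_eq)
  then have "Z \<le> kac per d \<alpha> L" if "2 ^ k < L" for L
    using kac_ge[OF assms that, of per] unfolding c_def by linarith
  then show "\<forall>\<^sub>F L in sequentially. Z \<le> kac per d \<alpha> L"
    by (intro eventually_sequentiallyI[of "Suc (2 ^ k)"]) auto
qed

lemma kac_prefactor_tendsto_0: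
  assumes "1 \<le> d" "0 \<le> \<alpha>" "\<alpha> \<le> real d"
  shows "(\<lambda>L. complex_of_real (1 / (2 * kac per d \<alpha> L))) \<longlonglongrightarrow> 0"
proof -
  have "(\<lambda>L. inverse (kac per d \<alpha> L) / 2) \<longlonglongrightarrow> 0"
    by (intro tendsto_divide_zero tendsto_inverse_0_at_top kac_tendsto_at_top assms)
  then have "(\<lambda>L. 1 / (2 * kac per d \<alpha> L)) \<longlonglongrightarrow> 0"
    by (simp add: field_simps)
  from tendsto_of_real[OF this, where 'a = complex, unfolded of_real_0] show ?thesis .
qed

section \<open>Bounds on the generators\<close>

lemma finite_cfgs: "finite \<Lambda> \<Longrightarrow> finite (cfgs D \<Lambda>)"
  by (rule finite_subset[OF _ finite_set_of_finite_funs[of \<Lambda> "{..<D}" 0]]) (auto simp: cfgs_def)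

lemma entries_le_emb1:
  assumes "0 < D" "\<forall>a<D. \<forall>b<D. cmod (A a b) \<le> c" "0 \<le> c"
  shows "entries_le (cfgs D \<Lambda>) (emb1 k A) c"
proof -
  have "\<sigma> k < D" if "\<sigma> \<in> cfgs D \<Lambda>" for \<sigma>
    using that assms(1) unfolding cfgs_def by (cases "k \<in> \<Lambda>") auto
  then show ?thesis
    unfolding entries_le_def emb1_def using assms by auto
qed

lemma entries_le_emb2:
  assumes "j \<in> \<Lambda>" "k \<in> \<Lambda>" "\<forall>a\<in>{..<D}\<times>{..<D}. \<forall>b\<in>{..<D}\<times>{..<D}. cmod (V a b) \<le> c" "0 \<le> c"
  shows "entries_le (cfgs D \<Lambda>) (emb2 j k V) c"
  unfolding entries_le_def emb2_def using assms unfolding cfgs_def by auto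

text \<open>Bound on the entrywise 1-norm of the one- and two-site generators as operators: \<open>c\<close> bounds
  the entries of the data, \<open>n\<close> is the dimension and \<open>m\<close> the number of jump operators.\<close>

definition gen_const :: "real \<Rightarrow> nat \<Rightarrow> nat \<Rightarrow> real" where
  "gen_const c n m = 2 * c * real n + real m * (c * (2 * (c * real n)\<^sup>2))"

lemma gen_const_nonneg: "0 \<le> c \<Longrightarrow> 0 \<le> gen_const c n m"
  unfolding gen_const_def by simp

lemma l1norm_Lloc_le:
  assumes "0 \<le> c" and h: "entries_le I (emb1 k (h k)) c"
    and L: "\<And>\<mu>. \<mu> < m \<Longrightarrow> entries_le I (emb1 k (Lop \<mu>)) c"
    and \<kappa>: "\<And>\<mu>. \<mu> < m \<Longrightarrow> 0 \<le> \<kappa> \<mu> k \<and> \<kappa> \<mu> k \<le> c"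
  shows "l1norm I (Lloc I m h \<kappa> Lop k X) \<le> gen_const c (card I) m * l1norm I X"
proof -
  let ?n = "real (card I)"
  have diss: "l1norm I (\<lambda>\<sigma> \<tau>. complex_of_real (\<kappa> \<mu> k) * dterm I (emb1 k (Lop \<mu>)) (emb1 k (Lop \<mu>)) X \<sigma> \<tau>)
      \<le> c * (2 * (c * ?n)\<^sup>2 * l1norm I X)" if "\<mu> \<in> {..<m}" for \<mu>
    using that \<kappa>[of \<mu>] l1norm_dterm_le[OF L L \<open>0 \<le> c\<close>, of \<mu> \<mu> X]
    unfolding l1norm_scale by (intro mult_mono) (auto simp: l1norm_nonneg)
  have "l1norm I (Lloc I m h \<kappa> Lop k X)
      \<le> l1norm I (\<lambda>\<sigma> \<tau>. - \<i> * comm I (emb1 k (h k)) X \<sigma> \<tau>)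
        + l1norm I (\<lambda>\<sigma> \<tau>. \<Sum>\<mu><m. complex_of_real (\<kappa> \<mu> k) * dterm I (emb1 k (Lop \<mu>)) (emb1 k (Lop \<mu>)) X \<sigma> \<tau>)"
    unfolding Lloc_def by (rule l1norm_add_le)
  also have "\<dots> \<le> l1norm I (comm I (emb1 k (h k)) X)
        + (\<Sum>\<mu><m. l1norm I (\<lambda>\<sigma> \<tau>. complex_of_real (\<kappa> \<mu> k) * dterm I (emb1 k (Lop \<mu>)) (emb1 k (Lop \<mu>)) X \<sigma> \<tau>))"
    by (intro add_mono l1norm_sum_le) (simp add: l1norm_scale)
  also have "\<dots> \<le> 2 * c * ?n * l1norm I X + (\<Sum>\<mu><m. c * (2 * (c * ?n)\<^sup>2 * l1norm I X))"
    by (intro add_mono l1norm_comm_le[OF h] sum_mono diss)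
  finally show ?thesis
    unfolding gen_const_def by (simp add: algebra_simps)
qed

lemma l1norm_Lpair_le:
  assumes "0 \<le> c"
    and V: "entries_le I (\<lambda>\<sigma> \<tau>. emb2 j k (V j k) \<sigma> \<tau> + emb2 j k (V k j) \<sigma> \<tau>) (2 * c)"
    and Lj: "\<And>\<mu>. \<mu> < m \<Longrightarrow> entries_le I (emb1 j (Lop \<mu>)) c"
    and Lk: "\<And>\<mu>. \<mu> < m \<Longrightarrow> entries_le I (emb1 k (Lop \<mu>)) c"
    and w: "\<And>\<mu>. \<mu> < m \<Longrightarrow> cmod (w \<mu> j k) \<le> c \<and> cmod (w \<mu> k j) \<le> c"
  shows "l1norm I (Lpair I m V w Lop j k X) \<le> gen_const c (card I) m * l1norm I X"
proof -
  let ?n = "real (card I)"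
  let ?H = "\<lambda>\<sigma> \<tau>. if j = k then 0
      else - (\<i> / 2) * comm I (\<lambda>\<sigma>' \<tau>'. emb2 j k (V j k) \<sigma>' \<tau>' + emb2 j k (V k j) \<sigma>' \<tau>') X \<sigma> \<tau>"
  let ?D = "\<lambda>\<mu> \<sigma> \<tau>. w \<mu> j k / 2 * dterm I (emb1 j (Lop \<mu>)) (emb1 k (Lop \<mu>)) X \<sigma> \<tau>
      + w \<mu> k j / 2 * dterm I (emb1 k (Lop \<mu>)) (emb1 j (Lop \<mu>)) X \<sigma> \<tau>"
  have H: "l1norm I ?H \<le> 2 * c * ?n * l1norm I X"
  proof (cases "j = k")
    case True
    then show ?thesis using \<open>0 \<le> c\<close> by (simp add: l1norm_nonneg)
  next
    case False
    then have "l1norm I ?H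
        = cmod (- (\<i> / 2)) * l1norm I (comm I (\<lambda>\<sigma>' \<tau>'. emb2 j k (V j k) \<sigma>' \<tau>' + emb2 j k (V k j) \<sigma>' \<tau>') X)"
      by (simp only: if_False l1norm_scale)
    then show ?thesis
      using l1norm_comm_le[OF V, of X] by (simp add: norm_divide)
  qed
  have D: "l1norm I (?D \<mu>) \<le> c * (2 * (c * ?n)\<^sup>2 * l1norm I X)" if "\<mu> \<in> {..<m}" for \<mu>
  proof -
    have "l1norm I (?D \<mu>)
        \<le> cmod (w \<mu> j k / 2) * l1norm I (dterm I (emb1 j (Lop \<mu>)) (emb1 k (Lop \<mu>)) X)
          + cmod (w \<mu> k j / 2) * l1norm I (dterm I (emb1 k (Lop \<mu>)) (emb1 j (Lop \<mu>)) X)"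
      unfolding l1norm_scale[symmetric] by (rule l1norm_add_le)
    also have "\<dots> \<le> c / 2 * (2 * (c * ?n)\<^sup>2 * l1norm I X) + c / 2 * (2 * (c * ?n)\<^sup>2 * l1norm I X)"
      using that w[of \<mu>] \<open>0 \<le> c\<close>
        l1norm_dterm_le[OF Lj Lk \<open>0 \<le> c\<close>, of \<mu> \<mu> X] l1norm_dterm_le[OF Lk Lj \<open>0 \<le> c\<close>, of \<mu> \<mu> X]
      by (intro add_mono mult_mono) (auto simp: norm_divide l1norm_nonneg)
    finally show ?thesis by (simp add: mult_ac)
  qed
  have "l1norm I (Lpair I m V w Lop j k X) \<le> l1norm I ?H + (\<Sum>\<mu><m. l1norm I (?D \<mu>))"
    unfolding Lpair_def using order_trans[OF l1norm_add_le add_mono[OF order_refl l1norm_sum_le]] .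
  also have "\<dots> \<le> 2 * c * ?n * l1norm I X + (\<Sum>\<mu><m. c * (2 * (c * ?n)\<^sup>2 * l1norm I X))"
    by (intro add_mono H sum_mono D)
  finally show ?thesis
    unfolding gen_const_def by (simp add: algebra_simps)
qed

lemma Lfull_diff:
  "Lfull per d \<alpha> D \<Lambda> m h V Lop \<kappa> w L (\<lambda>a b. X a b - Y a b) \<sigma> \<tau> =
   Lfull per d \<alpha> D \<Lambda> m h V Lop \<kappa> w L X \<sigma> \<tau> - Lfull per d \<alpha> D \<Lambda> m h V Lop \<kappa> w L Y \<sigma> \<tau>"
proof -
  have comm: "comm I A (\<lambda>a b. X a b - Y a b) \<sigma> \<tau> = comm I A X \<sigma> \<tau> - comm I A Y \<sigma> \<tau>" for I A \<sigma> \<tau>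
    unfolding comm_def mm_diff_right mm_diff_left by simp
  have dterm: "dterm I A B (\<lambda>a b. X a b - Y a b) \<sigma> \<tau> = dterm I A B X \<sigma> \<tau> - dterm I A B Y \<sigma> \<tau>" for I A B \<sigma> \<tau>
    unfolding dterm_def mm_diff_right mm_diff_left by (simp add: algebra_simps)
  have Lloc: "Lloc I m h \<kappa> Lop k (\<lambda>a b. X a b - Y a b) \<sigma> \<tau> = Lloc I m h \<kappa> Lop k X \<sigma> \<tau> - Lloc I m h \<kappa> Lop k Y \<sigma> \<tau>"
    for I k \<sigma> \<tau>
    unfolding Lloc_def comm dterm by (simp add: algebra_simps sum_subtractf)
  have Lpair: "Lpair I m V w Lop j k (\<lambda>a b. X a b - Y a b) \<sigma> \<tau>
      = Lpair I m V w Lop j k X \<sigma> \<tau> - Lpair I m V w Lop j k Y \<sigma> \<tau>" for I j k \<sigma> \<tau>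
    unfolding Lpair_def comm dterm by (simp add: algebra_simps sum_subtractf)
  show ?thesis
    unfolding Lfull_def Lloc Lpair by (simp add: algebra_simps sum_subtractf diff_divide_distrib)
qed

definition Lint :: "bool \<Rightarrow> nat \<Rightarrow> real \<Rightarrow> nat \<Rightarrow> site set \<Rightarrow> nat \<Rightarrow> (site \<Rightarrow> site \<Rightarrow> top)
   \<Rightarrow> (nat \<Rightarrow> site \<Rightarrow> site \<Rightarrow> complex) \<Rightarrow> (nat \<Rightarrow> sop) \<Rightarrow> nat \<Rightarrow> op \<Rightarrow> op" where
  "Lint per d \<alpha> D \<Lambda> m V w Lop L X = (\<lambda>\<sigma> \<tau>. \<Sum>j\<in>\<Lambda>. \<Sum>k\<in>\<Lambda>. Lpair (cfgs D \<Lambda>) m V w Lop j k X \<sigma> \<tau> /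
      complex_of_real (if j = k then 1 else gnorm per L d j k powr \<alpha>))"

lemma Lfull_eq_Lhat_plus_Lint:
  "Lfull per d \<alpha> D \<Lambda> m h V Lop \<kappa> w L X \<sigma> \<tau> =
   Lhat D \<Lambda> m h Lop \<kappa> X \<sigma> \<tau> + complex_of_real (1 / (2 * kac per d \<alpha> L)) * Lint per d \<alpha> D \<Lambda> m V w Lop L X \<sigma> \<tau>"
  unfolding Lfull_def Lhat_def Lint_def ..

text \<open>Distinct lattice sites are at distance at least \<open>1\<close>, so the weights \<open>\<parallel>r\<^sub>j - r\<^sub>k\<parallel>^(-\<alpha>)\<close> are at
  most \<open>1\<close> (coinciding sites give weight \<open>0\<close> by the convention \<open>x / 0 = 0\<close>).\<close>

lemma gnorm_eq_0_or_ge_1: "gnorm per L d j k = 0 \<or> 1 \<le> gnorm per L d j k"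
proof -
  define S where "S = (\<Sum>i<d. (cdist per L (j ! i) (k ! i))\<^sup>2)"
  have "cdist per L a b \<in> \<int>" for a b
  proof -
    have "\<bar>real a - real b\<bar> = of_int \<bar>int a - int b\<bar>" by simp
    then show ?thesis unfolding cdist_def by (auto simp: min_def)
  qed
  then have "S \<in> \<int>" unfolding S_def by (intro Ints_sum Ints_power)
  moreover have "0 \<le> S" unfolding S_def by (simp add: sum_nonneg)
  ultimately have "S = 0 \<or> 1 \<le> S"
    by (metis Ints_cases of_int_0_le_iff of_int_le_iff of_int_0 zless_imp_add1_zle le_less add_0
        of_int_1)
  then show ?thesis unfolding gnorm_def S_def[symmetric] by auto
qed

lemma l1norm_div_pair_weight_le:
  assumes "0 \<le> \<alpha>"
  shows "l1norm I (\<lambda>a b. X a b / complex_of_real (if j = k then 1 else gnorm per L d j k powr \<alpha>))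
    \<le> l1norm I X"
proof -
  have "cmod (inverse (complex_of_real (if j = k then 1 else gnorm per L d j k powr \<alpha>))) \<le> 1"
    using gnorm_eq_0_or_ge_1[of per L d j k] ge_one_powr_ge_zero[OF _ assms, of "gnorm per L d j k"]
    by (auto simp: norm_inverse inverse_le_1_iff)
  then show ?thesis
    by (rule l1norm_divide_le)
qed

lemma l1norm_Lhat_le:
  assumes "0 < D" "0 \<le> c"
    and h: "\<And>k. \<forall>a<D. \<forall>b<D. cmod (h k a b) \<le> c"
    and L: "\<And>\<mu>. \<mu> < m \<Longrightarrow> \<forall>a<D. \<forall>b<D. cmod (Lop \<mu> a b) \<le> c"
    and \<kappa>: "\<And>\<mu> k. \<mu> < m \<Longrightarrow> 0 \<le> \<kappa> \<mu> k \<and> \<kappa> \<mu> k \<le> c"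
  shows "l1norm (cfgs D \<Lambda>) (Lhat D \<Lambda> m h Lop \<kappa> X)
    \<le> (real (card \<Lambda>))\<^sup>2 * gen_const c (card (cfgs D \<Lambda>)) m * l1norm (cfgs D \<Lambda>) X"
proof -
  let ?I = "cfgs D \<Lambda>" and ?g = "gen_const c (card (cfgs D \<Lambda>)) m"
  have g: "0 \<le> ?g" using gen_const_nonneg[OF \<open>0 \<le> c\<close>] .
  have "l1norm ?I (Lhat D \<Lambda> m h Lop \<kappa> X) \<le> (\<Sum>k\<in>\<Lambda>. l1norm ?I (Lloc ?I m h \<kappa> Lop k X))"
    unfolding Lhat_def by (rule l1norm_sum_le)
  also have "\<dots> \<le> (\<Sum>k\<in>\<Lambda>. ?g * l1norm ?I X)"
    using assms by (intro sum_mono l1norm_Lloc_le entries_le_emb1) auto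
  also have "\<dots> = real (card \<Lambda>) * (?g * l1norm ?I X)"
    by simp
  also have "\<dots> \<le> (real (card \<Lambda>))\<^sup>2 * (?g * l1norm ?I X)"
    using g le_square[of "card \<Lambda>"] unfolding power2_eq_square
    by (intro mult_right_mono) (auto simp: l1norm_nonneg simp flip: of_nat_mult)
  finally show ?thesis by (simp add: mult.assoc)
qed

lemma l1norm_Lint_le:
  assumes "0 < D" "0 \<le> c" "0 \<le> \<alpha>"
    and V: "\<And>j k. \<forall>a\<in>{..<D}\<times>{..<D}. \<forall>b\<in>{..<D}\<times>{..<D}. cmod (V j k a b) \<le> c"
    and L: "\<And>\<mu>. \<mu> < m \<Longrightarrow> \<forall>a<D. \<forall>b<D. cmod (Lop \<mu> a b) \<le> c"
    and w: "\<And>\<mu> j k. \<mu> < m \<Longrightarrow> cmod (w \<mu> j k) \<le> c"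
  shows "l1norm (cfgs D \<Lambda>) (Lint per d \<alpha> D \<Lambda> m V w Lop L X)
    \<le> (real (card \<Lambda>))\<^sup>2 * gen_const c (card (cfgs D \<Lambda>)) m * l1norm (cfgs D \<Lambda>) X"
proof -
  let ?I = "cfgs D \<Lambda>" and ?g = "gen_const c (card (cfgs D \<Lambda>)) m"
  have pair: "l1norm ?I (Lpair ?I m V w Lop j k X) \<le> ?g * l1norm ?I X" if "j \<in> \<Lambda>" "k \<in> \<Lambda>" for j k
  proof (rule l1norm_Lpair_le[OF \<open>0 \<le> c\<close>])
    show "entries_le ?I (\<lambda>\<sigma> \<tau>. emb2 j k (V j k) \<sigma> \<tau> + emb2 j k (V k j) \<sigma> \<tau>) (2 * c)"
      using entries_le_add[OF entries_le_emb2[OF that V \<open>0 \<le> c\<close>] entries_le_emb2[OF that V \<open>0 \<le> c\<close>]]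
      by simp
  qed (use assms in \<open>auto intro: entries_le_emb1\<close>)
  have "l1norm ?I (Lint per d \<alpha> D \<Lambda> m V w Lop L X)
      \<le> (\<Sum>j\<in>\<Lambda>. \<Sum>k\<in>\<Lambda>. l1norm ?I (\<lambda>\<sigma> \<tau>. Lpair ?I m V w Lop j k X \<sigma> \<tau> /
          complex_of_real (if j = k then 1 else gnorm per L d j k powr \<alpha>)))"
    unfolding Lint_def by (intro order_trans[OF l1norm_sum_le] sum_mono l1norm_sum_le)
  also have "\<dots> \<le> (\<Sum>j\<in>\<Lambda>. \<Sum>k\<in>\<Lambda>. ?g * l1norm ?I X)"
    by (intro sum_mono order_trans[OF l1norm_div_pair_weight_le[OF \<open>0 \<le> \<alpha>\<close>] pair])
  finally show ?thesis
    by (simp add: power2_eq_square mult_ac)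
qed

theorem lemma2:
  fixes per :: bool and d D m :: nat and \<alpha> :: real
    and \<Lambda> :: "site set"
    and h :: "nat \<Rightarrow> site \<Rightarrow> sop"
    and V :: "nat \<Rightarrow> site \<Rightarrow> site \<Rightarrow> top"
    and Lop :: "nat \<Rightarrow> nat \<Rightarrow> sop"
    and \<kappa> :: "nat \<Rightarrow> nat \<Rightarrow> site \<Rightarrow> real"
    and w :: "nat \<Rightarrow> nat \<Rightarrow> site \<Rightarrow> site \<Rightarrow> complex"
    and Q :: op and t :: real
  assumes "1 \<le> d" and "2 \<le> D" and "0 \<le> \<alpha>" and "\<alpha> \<le> real d"
    and "finite \<Lambda>"
    and "\<forall>r\<in>\<Lambda>. length r = d \<and> (\<forall>i<d. 1 \<le> r ! i)"
    and "\<forall>L k. \<forall>a<D. \<forall>b<D. h L k a b = cnj (h L k b a)"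
    and "\<forall>L j k. \<forall>a\<in>{..<D}\<times>{..<D}. \<forall>b\<in>{..<D}\<times>{..<D}. V L j k a b = cnj (V L j k b a)"
    and "\<forall>L \<mu> k. \<mu> < m \<longrightarrow> 0 \<le> \<kappa> L \<mu> k"
    and "\<exists>B. \<forall>L j k \<mu>.
           (\<forall>a<D. \<forall>b<D. cmod (h L k a b) \<le> B) \<and>
           (\<forall>a\<in>{..<D}\<times>{..<D}. \<forall>b\<in>{..<D}\<times>{..<D}. cmod (V L j k a b) \<le> B) \<and>
           (\<mu> < m \<longrightarrow> (\<forall>a<D. \<forall>b<D. cmod (Lop L \<mu> a b) \<le> B) \<and>
                      \<kappa> L \<mu> k \<le> B \<and> cmod (w L \<mu> j k) \<le> B)"
    and "\<forall>\<^sub>F L in sequentially. \<forall>s\<ge>0.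
           cptp (cfgs D \<Lambda>) (sexp s (Lfull per d \<alpha> D \<Lambda> m (h L) (V L) (Lop L) (\<kappa> L) (w L) L))"
    and "0 \<le> t"
  shows "(\<lambda>L. trace_norm (cfgs D \<Lambda>)
            (\<lambda>\<sigma> \<tau>. sexp t (Lfull per d \<alpha> D \<Lambda> m (h L) (V L) (Lop L) (\<kappa> L) (w L) L) Q \<sigma> \<tau>
                    - sexp t (Lhat D \<Lambda> m (h L) (Lop L) (\<kappa> L)) Q \<sigma> \<tau>))
         \<longlonglongrightarrow> 0"
proof -
  obtain c where
    h: "\<And>L k. \<forall>a<D. \<forall>b<D. cmod (h L k a b) \<le> c" and
    V: "\<And>L j k. \<forall>a\<in>{..<D}\<times>{..<D}. \<forall>b\<in>{..<D}\<times>{..<D}. cmod (V L j k a b) \<le> c" and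
    Lop: "\<And>L \<mu>. \<mu> < m \<Longrightarrow> \<forall>a<D. \<forall>b<D. cmod (Lop L \<mu> a b) \<le> c" and
    \<kappa>: "\<And>L \<mu> k. \<mu> < m \<Longrightarrow> 0 \<le> \<kappa> L \<mu> k \<and> \<kappa> L \<mu> k \<le> c" and
    w: "\<And>L \<mu> j k. \<mu> < m \<Longrightarrow> cmod (w L \<mu> j k) \<le> c"
    using assms(9,10) by (elim exE) (rule that; blast)
  have D: "0 < D" using assms(2) by simp
  then have "cmod (h 0 [] 0 0) \<le> c" using h by blast
  then have "0 \<le> c" by (rule order_trans[OF norm_ge_zero])
  let ?K = "(real (card \<Lambda>))\<^sup>2 * gen_const c (card (cfgs D \<Lambda>)) m"
  show ?thesis
  proof (rule trace_norm_sexp_perturbation_tendsto_0[OF finite_cfgs[OF assms(5)] assms(12)])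
    show "(\<lambda>L. complex_of_real (1 / (2 * kac per d \<alpha> L))) \<longlonglongrightarrow> 0"
      by (rule kac_prefactor_tendsto_0[OF assms(1,3,4)])
    show "0 \<le> ?K"
      using gen_const_nonneg[OF \<open>0 \<le> c\<close>] by simp
    show "l1norm (cfgs D \<Lambda>) (Lhat D \<Lambda> m (h L) (Lop L) (\<kappa> L) X) \<le> ?K * l1norm (cfgs D \<Lambda>) X" for L X
      using D \<open>0 \<le> c\<close> h Lop \<kappa> by (rule l1norm_Lhat_le)
    show "l1norm (cfgs D \<Lambda>) (Lint per d \<alpha> D \<Lambda> m (V L) (w L) (Lop L) L X) \<le> ?K * l1norm (cfgs D \<Lambda>) X"
      for L X
      using D \<open>0 \<le> c\<close> assms(3) V Lop w by (rule l1norm_Lint_le)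
  qed (rule Lfull_diff, rule Lfull_eq_Lhat_plus_Lint)
qed

end
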